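(* Let $E$ be a complex vector bundle over a topological space $X$, and for $k\geq 1$ let $b^{(k)}_{\lambda}\in\mathbb{Q}$ be the universal rational coefficients defined by $$ch\big(\gamma^k(\widetilde{E})\big)=\sum_{\lambda}b^{(k)}_{\lambda}\, c_{\lambda}(E),$$ the sum running over all integer partitions $\lambda$. Fix an integer partition $\lambda=(\lambda_1,\ldots,\lambda_{l(\lambda)})=(1^{m_1(\lambda)}2^{m_2(\lambda)}\cdots)$. Then $$\sum_{k\geq1}b^{(k)}_{\lambda}\, t^k=\frac{(-1)^{|\lambda|-l(\lambda)}}{\prod_{i\geq1}m_i(\lambda)!}\sum_{\pi\in\Pi_{l(\lambda)}}\bigg\{\Big[\prod_{i=1}^{l(\pi)}(|\pi_i|-1)!\Big]\Big[\prod_{i=1}^{l(\pi)}\sum_{j=0}^{\lambda_{\pi_i}-1}\frac{S(\lambda_{\pi_i},\lambda_{\pi_i}-j)}{\binom{\lambda_{\pi_i}-1}{j}\cdot j!}(-t)^{\lambda_{\pi_i}-1-j}\Big]t^{l(\pi)}\bigg\},$$ i.e. $b^{(k)}_{\lambda}$ is the coefficient of $t^k$ on the right-hand side.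
   Context: For complex vector bundles $E,F$, $\wedge_t(E):=1+\sum_{k\geq1}\wedge^k(E)t^k$ (exterior powers), extended to virtual bundles by $\wedge_t(E-F)=\wedge_t(E)[\wedge_t(F)]^{-1}\in K(X)[[t]]$. The operations $\gamma^k$ are defined by $1+\sum_{k\geq1}\gamma^k(E-F)t^k:=\wedge_{t/(1-t)}(E-F)$. $\widetilde{E}:=E-\underline{\mathbb{C}}^{\dim E}$ (subtracting the trivial bundle of the same rank). $ch$ is the Chern character. For an integer partition $\lambda=(\lambda_1\geq\cdots\geq\lambda_l>0)$: $l(\lambda)=l$ is its length, $|\lambda|=\sum\lambda_i$ its weight, $m_i(\lambda)$ the number of parts equal to $i$, and $c_\lambda(E):=\prod_{i=1}^{l(\lambda)}c_{\lambda_i}(E)$. $\Pi_n$ is the set of all set partitions of $[n]=\{1,\ldots,n\}$ into disjoint nonempty blocks; for $\pi=\{\pi_1,\ldots,\pi_{l(\pi)}\}\in\Pi_{l(\lambda)}$, $l(\pi)$ is the number of blocks, $|\pi_i|$ the cardinality of a block, and $\lambda_{\pi_i}:=\sum_{j\in\pi_i}\lambda_j$. $S(n,k)$ is the Stirling number of the second kind (number of partitions of $[n]$ into exactly $k$ blocks), with $S(n,k)=0$ if $k>n$, $S(n,0)=0$ for $n>0$, $S(0,0)=1$. *)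

theory Defs
  imports "HOL-Computational_Algebra.Computational_Algebra" "HOL-Combinatorics.Stirling"
          "HOL-Library.Disjoint_Sets"
begin

definition is_partition :: "nat list \<Rightarrow> bool" where
  "is_partition lam \<longleftrightarrow> sorted_wrt (\<ge>) lam \<and> 0 \<notin> set lam"

definition partitions_of :: "nat \<Rightarrow> nat list set" where
  "partitions_of m = {lam. is_partition lam \<and> sum_list lam = m}"

definition esym :: "nat \<Rightarrow> nat \<Rightarrow> (nat \<Rightarrow> 'a::comm_semiring_1) \<Rightarrow> 'a" where
  "esym n k y = (\<Sum>S\<in>{S. S \<subseteq> {..<n} \<and> card S = k}. \<Prod>i\<in>S. y i)"

(* c_lambda evaluated at Chern roots x_0..x_{n-1}: prod_i e_{lambda_i}(x) *)
definition c_part :: "nat \<Rightarrow> nat list \<Rightarrow> (nat \<Rightarrow> real) \<Rightarrow> real" where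
  "c_part n lam x = (\<Prod>j<length lam. esym n (lam ! j) x)"

(* Splitting principle: for E with Chern roots x_i (line bundles L_i, c_1(L_i)=x_i),
   gamma^k(E~) = e_k(L_0 - 1, ..., L_{n-1} - 1), hence
   ch(gamma^k(E~)) = e_k(e^{x_0}-1,...,e^{x_{n-1}}-1).  Its homogeneous degree-m part
   is the coefficient of s^m of e_k(e^{s x_0}-1, ..., e^{s x_{n-1}}-1) as a power series in s.
   b is the family of universal coefficients iff for every rank n and all roots x,
   degree-m part of ch(gamma^k(E~)) = sum over partitions mu of m of b^(k)_mu c_mu(E). *)
definition ch_gamma_coeffs :: "(nat \<Rightarrow> nat list \<Rightarrow> rat) \<Rightarrow> bool" where
  "ch_gamma_coeffs b \<longleftrightarrow>
     (\<forall>k\<ge>1. \<forall>n m. \<forall>x::nat \<Rightarrow> real.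
        fps_nth (esym n k (\<lambda>i. fps_exp (x i) - 1)) m
          = (\<Sum>mu\<in>partitions_of m. of_rat (b k mu) * c_part n mu x))"

definition inner_poly :: "nat \<Rightarrow> rat poly" where
  "inner_poly a = (\<Sum>j<a. smult (of_nat (Stirling a (a - j)) /
        (of_nat ((a - 1) choose j) * of_nat (fact j))) ([:0, -1:] ^ (a - 1 - j)))"

(* lambda_{B} = sum of parts indexed by block B (0-indexed) *)
definition block_weight :: "nat list \<Rightarrow> nat set \<Rightarrow> nat" where
  "block_weight lam B = (\<Sum>j\<in>B. lam ! j)"

definition rhs_poly :: "nat list \<Rightarrow> rat poly" where
  "rhs_poly lam =
     smult ((-1) ^ (sum_list lam - length lam) /
            (\<Prod>i\<in>set lam. of_nat (fact (count_list lam i))))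
       (\<Sum>P\<in>{P. partition_on {..<length lam} P}.
          smult (\<Prod>B\<in>P. of_nat (fact (card B - 1)))
            ((\<Prod>B\<in>P. inner_poly (block_weight lam B)) * monom 1 (card P)))"

end

theory Submission
  imports Defs "HOL-Combinatorics.Multiset_Permutations"
begin

text \<open>
  By the splitting principle, E may be taken to be a sum of line bundles with Chern roots x_i, so
  that sum_k t^k ch(gamma^k(E - rank E)) = prod_i (1 + t (e^x_i - 1)); its degree-m part is the
  coefficient of s^m in gamma_t(s) = prod_i (1 + t (e^(s x_i) - 1)). The logarithm of gamma_t(s)
  is sum_a p_a(x) kappa_a(t) s^a, where p_a is the a-th power sum and
  kappa_a(t) = [s^a] log (1 + t (e^s - 1)) = sum_r (-1)^(r-1) (r-1)! S(a,r) t^r / a!.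
  Newton's identity p_a = a sum_r (-1)^(a+r) (r-1)! [s^a] (E(s) - 1)^r / r!, with
  E(s) = prod_i (1 + x_i s) = sum_j c_j s^j, rewrites this logarithm in terms of Chern classes, and
  the exponential formula for set partitions exponentiates it to sum_lambda R_lambda(t) c_lambda,
  where R_lambda is the right-hand side of the theorem. Both sides are polynomials in t, so their
  coefficients of t^k agree; this determines b^(k)_lambda because the monomials c_lambda whose
  parts are at most the rank are linearly independent.
\<close>

section \<open>Elementary symmetric polynomials\<close>

lemma esym_0[simp]: "esym n 0 y = 1"
proof -
  have "S = {}" if "S \<subseteq> {..<n}" "card S = 0" for S :: "nat set"
    using finite_subset[OF that(1)] that(2) by simp
  then have "{S. S \<subseteq> {..<n} \<and> card S = 0} = {{}}" by auto
  then show ?thesis by (simp add: esym_def)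
qed

lemma esym_eq_0: "n < k \<Longrightarrow> esym n k y = 0"
proof -
  assume "n < k"
  have "card S \<noteq> k" if "S \<subseteq> {..<n}" for S :: "nat set"
    by (metis \<open>n < k\<close> card_lessThan card_mono finite_lessThan leD that)
  then have E: "{S. S \<subseteq> {..<n} \<and> card S = k} = {}" by blast
  show ?thesis unfolding esym_def E by simp
qed

lemma esym_cong: "(\<And>i. i < n \<Longrightarrow> y i = z i) \<Longrightarrow> esym n k y = esym n k z"
  unfolding esym_def by (intro sum.cong refl prod.cong) auto

lemma esym_Suc: "esym (Suc n) (Suc k) y = esym n (Suc k) y + y n * esym n k y"
proof -
  let ?A = "{S. S \<subseteq> {..<n} \<and> card S = Suc k}"
  let ?B = "{S. S \<subseteq> {..<n} \<and> card S = k}"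
  have fresh: "finite S \<and> n \<notin> S" if "S \<subseteq> {..<n}" for S
    using that finite_subset by blast
  have "{S. S \<subseteq> {..<Suc n} \<and> card S = Suc k} = ?A \<union> insert n ` ?B"
    unfolding lessThan_Suc subset_insert_lemma using fresh by (auto simp: image_def)
  moreover have "finite ?A" "finite ?B" "?A \<inter> insert n ` ?B = {}"
    by (auto intro: finite_subset[of _ "Pow {..<n}"])
  moreover have "inj_on (insert n) ?B"
    using fresh by (intro inj_onI) (metis Diff_insert_absorb mem_Collect_eq)
  ultimately have "esym (Suc n) (Suc k) y = esym n (Suc k) y + (\<Sum>S\<in>?B. \<Prod>i\<in>insert n S. y i)"
    unfolding esym_def by (simp add: sum.union_disjoint sum.reindex)
  also have "(\<Sum>S\<in>?B. \<Prod>i\<in>insert n S. y i) = y n * esym n k y"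
    unfolding esym_def sum_distrib_left using fresh by (intro sum.cong) auto
  finally show ?thesis .
qed

lemma esym_Suc_pos: "k \<ge> 1 \<Longrightarrow> esym (Suc n) k y = esym n k y + y n * esym n (k - 1) y"
  using esym_Suc[of n "k - 1" y] by simp

lemma prod_one_plus_eq_sum_esym: "(\<Prod>i<n. 1 + t * y i) = (\<Sum>k\<le>n. t^k * esym n k y)"
proof (induction n)
  case 0
  then show ?case by simp
next
  case (Suc n)
  have "(\<Prod>i<Suc n. 1 + t * y i) = (\<Sum>k\<le>n. t^k * esym n k y) * (1 + t * y n)"
    using Suc by simp
  also have "\<dots> = (\<Sum>k\<le>n. t^k * esym n k y) + (\<Sum>k\<le>n. t^k * esym n k y) * (t * y n)"
    by (simp add: distrib_left)
  also have "(\<Sum>k\<le>n. t^k * esym n k y) * (t * y n) = (\<Sum>k\<le>n. t^Suc k * (y n * esym n k y))"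
    by (simp add: sum_distrib_left sum_distrib_right mult_ac)
  also have "(\<Sum>k\<le>n. t^k * esym n k y) = (\<Sum>k\<le>Suc n. t^k * esym n k y)"
    by (simp add: esym_eq_0)
  also have "(\<Sum>k\<le>n. t^Suc k * (y n * esym n k y)) = (\<Sum>k\<le>Suc n. if k = 0 then 0 else t^k * (y n * esym n (k - 1) y))"
    by (subst sum.atMost_Suc_shift) simp
  also have "(\<Sum>k\<le>Suc n. t^k * esym n k y) + \<dots> = (\<Sum>k\<le>Suc n. t^k * esym (Suc n) k y)"
    by (subst sum.distrib[symmetric], intro sum.cong refl) (auto simp: esym_Suc_pos algebra_simps)
  finally show ?case .
qed

definition esym_fps :: "nat \<Rightarrow> (nat \<Rightarrow> real) \<Rightarrow> real fps" where
  "esym_fps n x = (\<Prod>i<n. 1 + fps_const (x i) * fps_X)"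

lemma esym_fps_nth: "esym_fps n x $ j = esym n j x"
proof (induction n arbitrary: j)
  case 0
  then show ?case by (cases j) (simp_all add: esym_fps_def esym_eq_0)
next
  case (Suc n)
  have "esym_fps (Suc n) x = esym_fps n x + fps_const (x n) * (esym_fps n x * fps_X)"
    by (simp add: esym_fps_def algebra_simps)
  then have "esym_fps (Suc n) x $ j = esym_fps n x $ j + x n * (if j = 0 then 0 else esym_fps n x $ (j - 1))"
    by (simp add: fps_X_mult_right_nth)
  then show ?case using Suc by (cases j) (simp_all add: esym_Suc)
qed

lemma esym_fps_nth_0: "esym_fps n x $ 0 = 1" by (simp add: esym_fps_nth)

lemma prod_list_map_eq_prod_nth: "prod_list (map f xs) = (\<Prod>j<length xs. f (xs ! j))"
  by (induction xs) (simp_all del: prod.lessThan_Suc add: prod.lessThan_Suc_shift)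

lemma c_part_prod_list: "c_part n lam x = prod_list (map (\<lambda>a. esym n a x) lam)"
  unfolding c_part_def prod_list_map_eq_prod_nth ..

section \<open>Linear independence of the Chern monomials\<close>

definition lower_parts :: "nat list \<Rightarrow> nat list" where
  "lower_parts mu = filter (\<lambda>a. a \<noteq> 0) (map (\<lambda>a. a - 1) mu)"

lemma c_part_lower_parts: "c_part n (lower_parts mu) x = (\<Prod>j<length mu. esym n (mu ! j - 1) x)"
proof -
  have "c_part n (lower_parts mu) x = prod_list (map (\<lambda>a. esym n (a - 1) x) mu)"
    unfolding c_part_prod_list lower_parts_def by (induction mu) auto
  then show ?thesis by (simp add: prod_list_map_eq_prod_nth)
qed

lemma is_partition_lower_parts: "is_partition mu \<Longrightarrow> is_partition (lower_parts mu)"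
proof -
  assume a: "is_partition mu"
  have "sorted_wrt (\<ge>) (map (\<lambda>a. a - 1) mu)"
    using a unfolding is_partition_def sorted_wrt_map by (auto elim!: sorted_wrt_mono_rel[rotated])
  then have "sorted_wrt (\<ge>) (lower_parts mu)" unfolding lower_parts_def by (rule sorted_wrt_filter)
  then show ?thesis unfolding is_partition_def lower_parts_def by auto
qed

lemma is_partition_mset_inj:
  assumes "is_partition mu" "is_partition nu" "mset mu = mset nu"
  shows "mu = nu"
proof -
  have s: "sorted (rev mu)" "sorted (rev nu)"
    using assms(1,2) by (auto simp: is_partition_def sorted_wrt_rev)
  have "sort mu = rev mu" by (rule properties_for_sort) (use s in auto)
  moreover have "sort mu = rev nu" by (rule properties_for_sort) (use s assms(3) in auto)
  ultimately show ?thesis by simp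
qed

lemma map_Suc_lower_parts: "0 \<notin> set mu \<Longrightarrow> map Suc (lower_parts mu) = filter (\<lambda>a. a \<noteq> 1) mu"
  unfolding lower_parts_def by (induction mu) auto

lemma mset_eq_lower_parts_plus_ones:
  assumes "0 \<notin> set mu"
  shows "mset mu = mset (map Suc (lower_parts mu)) + replicate_mset (length mu - length (lower_parts mu)) 1"
proof -
  have "mset mu = mset (filter (\<lambda>a. a \<noteq> 1) mu) + mset (filter (\<lambda>a. a = 1) mu)"
    using multiset_partition[of "mset mu" "\<lambda>a. a \<noteq> 1"] by (simp add: mset_filter)
  moreover have "filter (\<lambda>a. a = 1) mu = replicate (length (filter (\<lambda>a. a = 1) mu)) 1"
    by (induction mu) auto
  moreover have "length (filter (\<lambda>a. a = 1) mu) = length mu - length (lower_parts mu)"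
  proof -
    have "length (lower_parts mu) = length (filter (\<lambda>a. a \<noteq> 1) mu)"
      using map_Suc_lower_parts[OF assms] by (metis length_map)
    moreover have "length (filter (\<lambda>a. a \<noteq> 1) mu) + length (filter (\<lambda>a. a = 1) mu) = length mu"
      using sum_length_filter_compl[of "\<lambda>a. a = 1" mu] by simp
    ultimately show ?thesis by simp
  qed
  ultimately show ?thesis using map_Suc_lower_parts[OF assms] by (metis mset_replicate)
qed

lemma lower_parts_inj:
  assumes "is_partition mu" "is_partition nu" "length mu = length nu" "lower_parts mu = lower_parts nu"
  shows "mu = nu"
proof -
  have "0 \<notin> set mu" "0 \<notin> set nu" using assms(1,2) by (auto simp: is_partition_def)
  then have "mset mu = mset nu" using mset_eq_lower_parts_plus_ones assms(3,4) by metis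
  then show ?thesis using is_partition_mset_inj assms(1,2) by blast
qed

lemma degree_coeff_prod_linear:
  "degree (\<Prod>j<L. [:a j, b j:]) \<le> L \<and> coeff (\<Prod>j<L. [:a j, b j:]) L = (\<Prod>j<L. b j)"
proof (induction L)
  case 0
  then show ?case by simp
next
  case (Suc L)
  let ?p = "\<Prod>j<L. [:a j, b j:]"
  have eq: "(\<Prod>j<Suc L. [:a j, b j:]) = smult (a L) ?p + pCons 0 (smult (b L) ?p)"
    by (simp add: mult_pCons_right)
  have "coeff ?p (Suc L) = 0" using Suc by (simp add: coeff_eq_0)
  then have c: "coeff (\<Prod>j<Suc L. [:a j, b j:]) (Suc L) = (\<Prod>j<Suc L. b j)"
    unfolding eq using Suc by (simp add: mult.commute)
  have "degree (smult (a L) ?p) \<le> L" "degree (smult (b L) ?p) \<le> L"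
    using Suc degree_smult_le order_trans by blast+
  then have "degree (\<Prod>j<Suc L. [:a j, b j:]) \<le> Suc L"
    unfolding eq using degree_pCons_le[of 0 "smult (b L) ?p"] by (intro degree_add_le) auto
  then show ?case using c by simp
qed

lemma poly_prod_linear_eq_c_part:
  assumes "\<forall>a\<in>set mu. a \<ge> 1"
  shows "poly (\<Prod>j<length mu. [:esym n (mu!j) x, esym n (mu!j - 1) x:]) y = c_part (Suc n) mu (x(n := y))"
proof -
  have "esym (Suc n) (mu!j) (x(n := y)) = esym n (mu!j) x + y * esym n (mu!j - 1) x"
    if "j < length mu" for j
  proof -
    have "mu!j \<ge> 1" using assms that by auto
    then have "esym (Suc n) (mu!j) (x(n := y)) = esym n (mu!j) (x(n := y)) + y * esym n (mu!j - 1) (x(n := y))"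
      using esym_Suc_pos[of "mu!j" n "x(n := y)"] by simp
    moreover have "esym n k (x(n := y)) = esym n k x" for k by (rule esym_cong) auto
    ultimately show ?thesis by simp
  qed
  then show ?thesis unfolding c_part_def poly_prod by (intro prod.cong) (auto simp: algebra_simps)
qed

text \<open>As a polynomial in the last root x_n, c_lambda has degree l(lambda) and leading coefficient
  c_(lower_parts lambda) in the remaining roots.\<close>

lemma c_part_max_length_relation:
  assumes fin: "finite M" and pos: "\<forall>mu\<in>M. \<forall>a\<in>set mu. a \<ge> 1" and len: "\<forall>mu\<in>M. length mu \<le> L"
    and zero: "\<forall>x. (\<Sum>mu\<in>M. a mu * c_part (Suc n) mu x) = 0"
  shows "(\<Sum>mu | mu \<in> M \<and> length mu = L. a mu * c_part n (lower_parts mu) x) = 0"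
proof -
  define P where "P mu = (\<Prod>j<length mu. [:esym n (mu!j) x, esym n (mu!j - 1) x:])" for mu
  define Q where "Q = (\<Sum>mu\<in>M. smult (a mu) (P mu))"
  have "poly (P mu) y = c_part (Suc n) mu (x(n := y))" if "mu \<in> M" for mu y
    unfolding P_def using pos that by (intro poly_prod_linear_eq_c_part) auto
  then have "poly Q y = (\<Sum>mu\<in>M. a mu * c_part (Suc n) mu (x(n := y)))" for y
    unfolding Q_def poly_sum by simp
  then have "Q = 0" using zero by (simp flip: poly_all_0_iff_0)
  have coeff_P: "coeff (P mu) L = (if length mu = L then c_part n (lower_parts mu) x else 0)"
    if "mu \<in> M" for mu
    using degree_coeff_prod_linear[of "\<lambda>j. esym n (mu!j) x" "\<lambda>j. esym n (mu!j - 1) x" "length mu"]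
      len that unfolding P_def c_part_lower_parts by (auto simp: coeff_eq_0 order.order_iff_strict)
  have "0 = coeff Q L" using \<open>Q = 0\<close> by simp
  also have "\<dots> = (\<Sum>mu\<in>M. a mu * coeff (P mu) L)"
    unfolding Q_def by (simp add: coeff_sum)
  also have "\<dots> = (\<Sum>mu\<in>M. if length mu = L then a mu * c_part n (lower_parts mu) x else 0)"
    using coeff_P by (intro sum.cong) auto
  also have "\<dots> = (\<Sum>mu | mu \<in> M \<and> length mu = L. a mu * c_part n (lower_parts mu) x)"
    using fin by (simp add: sum.inter_filter)
  finally show ?thesis by simp
qed

lemma c_part_max_length_coeff_eq_0:
  assumes indep: "\<And>N b nu. finite N \<Longrightarrow> \<forall>nu\<in>N. is_partition nu \<and> (\<forall>a\<in>set nu. a \<le> n) \<Longrightarrow>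
      \<forall>x. (\<Sum>nu\<in>N. b nu * c_part n nu x) = 0 \<Longrightarrow> nu \<in> N \<Longrightarrow> b nu = 0"
    and fin: "finite M" and part: "\<forall>mu\<in>M. is_partition mu \<and> (\<forall>a\<in>set mu. a \<le> Suc n)"
    and zero: "\<forall>x. (\<Sum>mu\<in>M. a mu * c_part (Suc n) mu x) = 0"
    and mu: "mu \<in> M" "length mu = Max (length ` M)"
  shows "a mu = 0"
proof -
  define L where "L = Max (length ` M)"
  define MT where "MT = {mu \<in> M. length mu = L}"
  have pos: "\<forall>mu\<in>M. \<forall>a\<in>set mu. a \<ge> 1"
    using part unfolding is_partition_def by (metis less_one not_le)
  have len: "\<forall>mu\<in>M. length mu \<le> L" unfolding L_def using fin by simp
  have inj: "inj_on lower_parts MT"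
    unfolding MT_def using part by (intro inj_onI) (metis (mono_tags, lifting) lower_parts_inj mem_Collect_eq)
  have "(a \<circ> the_inv_into MT lower_parts) (lower_parts mu) = 0"
  proof (rule indep)
    show "finite (lower_parts ` MT)" using fin unfolding MT_def by simp
    show "\<forall>nu\<in>lower_parts ` MT. is_partition nu \<and> (\<forall>a\<in>set nu. a \<le> n)"
      using part is_partition_lower_parts unfolding MT_def lower_parts_def by fastforce
    show "\<forall>x. (\<Sum>nu\<in>lower_parts ` MT. (a \<circ> the_inv_into MT lower_parts) nu * c_part n nu x) = 0"
      using c_part_max_length_relation[OF fin pos len zero] inj
      by (simp add: sum.reindex the_inv_into_f_f MT_def)
    show "lower_parts mu \<in> lower_parts ` MT" using mu unfolding MT_def L_def by blast
  qed
  then show ?thesis using inj mu by (simp add: the_inv_into_f_f MT_def L_def)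
qed

lemma c_part_linear_independent:
  assumes "finite M" "\<forall>mu\<in>M. is_partition mu \<and> (\<forall>a\<in>set mu. a \<le> n)"
    "\<forall>x. (\<Sum>mu\<in>M. a mu * c_part n mu x) = 0" "mu \<in> M"
  shows "a mu = 0"
  using assms
proof (induction n arbitrary: M a mu)
  case (0 M a mu)
  then have "\<forall>nu\<in>M. nu = []" unfolding is_partition_def
    by (metis le_zero_eq list.set_sel(1))
  then have "M = {[]}" using 0 by auto
  then show ?case using 0 by (simp add: c_part_def)
next
  case (Suc n M0 a mu0)
  have "\<forall>mu\<in>M. a mu = 0" if "M \<subseteq> M0" "\<forall>x. (\<Sum>mu\<in>M. a mu * c_part (Suc n) mu x) = 0" for M
    using finite_subset[OF that(1) Suc.prems(1)] that
  proof (induction M rule: finite_psubset_induct)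
    case (psubset M)
    define MT where "MT = {mu \<in> M. length mu = Max (length ` M)}"
    have top: "a mu = 0" if "mu \<in> MT" for mu
    proof (rule c_part_max_length_coeff_eq_0[where n = n and M = M])
      fix N b nu
      assume "finite N" "\<forall>nu\<in>N. is_partition nu \<and> (\<forall>a\<in>set nu. a \<le> n)"
        "\<forall>x. (\<Sum>nu\<in>N. b nu * c_part n nu x) = 0" "nu \<in> N"
      then show "b nu = 0" by (rule Suc.IH)
    qed (use Suc.prems(2) psubset.hyps(1) psubset.prems that in \<open>auto simp: MT_def\<close>)
    show ?case
    proof (cases "M = {}")
      case False
      then have "Max (length ` M) \<in> length ` M" using psubset.hyps(1) by simp
      then have "M - MT \<subset> M" unfolding MT_def by auto
      moreover have "(\<Sum>mu\<in>M - MT. a mu * c_part (Suc n) mu x) = 0" for x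
      proof -
        have "(\<Sum>mu\<in>M. a mu * c_part (Suc n) mu x)
            = (\<Sum>mu\<in>M - MT. a mu * c_part (Suc n) mu x) + (\<Sum>mu\<in>MT. a mu * c_part (Suc n) mu x)"
          by (rule sum.subset_diff) (auto simp: MT_def psubset.hyps)
        then show ?thesis using psubset.prems(2) top by simp
      qed
      ultimately have "\<forall>mu\<in>M - MT. a mu = 0" using psubset.IH psubset.prems(1) by blast
      then show ?thesis using top by blast
    qed simp
  qed
  then show ?case using Suc.prems(3,4) by blast
qed

section \<open>The exponential formula for set partitions\<close>

definition weak_comps :: "nat set \<Rightarrow> nat \<Rightarrow> (nat \<Rightarrow> nat) set" where
  "weak_comps I m = {\<alpha>. (\<forall>i. i \<notin> I \<longrightarrow> \<alpha> i = 0) \<and> (\<Sum>i\<in>I. \<alpha> i) = m}"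

definition zero_outside :: "nat set \<Rightarrow> (nat \<Rightarrow> nat) \<Rightarrow> nat \<Rightarrow> nat" where
  "zero_outside B \<alpha> = (\<lambda>i. if i \<in> B then \<alpha> i else 0)"

lemma finite_weak_comps:
  assumes "finite I" shows "finite (weak_comps I m)"
proof (rule finite_subset)
  show "weak_comps I m \<subseteq> {\<alpha>. \<forall>i. (i \<in> I \<longrightarrow> \<alpha> i \<in> {..m}) \<and> (i \<notin> I \<longrightarrow> \<alpha> i = 0)}"
    using assms by (auto simp: weak_comps_def intro!: member_le_sum)
  show "finite {\<alpha>. \<forall>i. (i \<in> I \<longrightarrow> \<alpha> i \<in> {..m}) \<and> (i \<notin> I \<longrightarrow> \<alpha> i = 0)}"
    using assms by (intro finite_set_of_finite_funs) auto
qed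

lemma bij_betw_weak_comps_split:
  assumes fin: "finite I" and BI: "B \<subseteq> I"
  shows "bij_betw (\<lambda>\<alpha>. ((\<Sum>i\<in>B. \<alpha> i), zero_outside B \<alpha>, zero_outside (I - B) \<alpha>)) (weak_comps I m)
    (SIGMA a:{..m}. weak_comps B a \<times> weak_comps (I - B) (m - a))"
proof (rule bij_betw_byWitness[where f' = "\<lambda>q i. fst (snd q) i + snd (snd q) i"]; intro ballI subsetI)
  fix \<alpha> assume "\<alpha> \<in> weak_comps I m"
  then show "(\<lambda>i. fst (snd ((\<Sum>i\<in>B. \<alpha> i), zero_outside B \<alpha>, zero_outside (I - B) \<alpha>)) i
      + snd (snd ((\<Sum>i\<in>B. \<alpha> i), zero_outside B \<alpha>, zero_outside (I - B) \<alpha>)) i) = \<alpha>"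
    by (auto simp: weak_comps_def zero_outside_def)
next
  fix q assume "q \<in> (SIGMA a:{..m}. weak_comps B a \<times> weak_comps (I - B) (m - a))"
  then obtain a \<beta> \<gamma> where q: "q = (a, \<beta>, \<gamma>)" "\<beta> \<in> weak_comps B a" "\<gamma> \<in> weak_comps (I - B) (m - a)"
    by auto
  then show "((\<Sum>i\<in>B. fst (snd q) i + snd (snd q) i), zero_outside B (\<lambda>i. fst (snd q) i + snd (snd q) i),
      zero_outside (I - B) (\<lambda>i. fst (snd q) i + snd (snd q) i)) = q"
    by (auto simp: weak_comps_def zero_outside_def sum.distrib)
next
  fix q assume "q \<in> (\<lambda>\<alpha>. ((\<Sum>i\<in>B. \<alpha> i), zero_outside B \<alpha>, zero_outside (I - B) \<alpha>)) ` weak_comps I m"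
  then obtain \<alpha> where \<alpha>: "\<alpha> \<in> weak_comps I m" and q: "q = ((\<Sum>i\<in>B. \<alpha> i), zero_outside B \<alpha>, zero_outside (I - B) \<alpha>)"
    by blast
  have "(\<Sum>i\<in>I. \<alpha> i) = (\<Sum>i\<in>B. \<alpha> i) + (\<Sum>i\<in>I - B. \<alpha> i)"
    using fin BI by (metis add.commute sum.subset_diff)
  then show "q \<in> (SIGMA a:{..m}. weak_comps B a \<times> weak_comps (I - B) (m - a))"
    using \<alpha> unfolding q by (auto simp: weak_comps_def zero_outside_def)
next
  fix \<alpha> assume "\<alpha> \<in> (\<lambda>q i. fst (snd q) i + snd (snd q) i) ` (SIGMA a:{..m}. weak_comps B a \<times> weak_comps (I - B) (m - a))"
  then obtain a \<beta> \<gamma> where \<alpha>: "\<alpha> = (\<lambda>i. \<beta> i + \<gamma> i)" and a: "a \<le> m"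
    and \<beta>: "\<beta> \<in> weak_comps B a" and \<gamma>: "\<gamma> \<in> weak_comps (I - B) (m - a)"
    by auto
  have "(\<Sum>i\<in>I. \<beta> i) = (\<Sum>i\<in>B. \<beta> i)"
    using fin BI \<beta> by (intro sum.mono_neutral_right) (auto simp: weak_comps_def)
  moreover have "(\<Sum>i\<in>I. \<gamma> i) = (\<Sum>i\<in>I - B. \<gamma> i)"
    using fin \<gamma> by (intro sum.mono_neutral_right) (auto simp: weak_comps_def)
  ultimately show "\<alpha> \<in> weak_comps I m"
    using \<beta> \<gamma> a BI unfolding \<alpha> by (auto simp: weak_comps_def sum.distrib)
qed

lemma sum_weak_comps_split:
  fixes F G :: "(nat \<Rightarrow> nat) \<Rightarrow> real"
  assumes fin: "finite I" and BI: "B \<subseteq> I"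
  shows "(\<Sum>\<alpha>\<in>weak_comps I m. F (zero_outside B \<alpha>) * G (zero_outside (I - B) \<alpha>)) =
         (\<Sum>a\<le>m. (\<Sum>\<beta>\<in>weak_comps B a. F \<beta>) * (\<Sum>\<gamma>\<in>weak_comps (I - B) (m - a). G \<gamma>))"
proof -
  have finB: "finite B" using fin BI finite_subset by blast
  have "(\<Sum>a\<le>m. (\<Sum>\<beta>\<in>weak_comps B a. F \<beta>) * (\<Sum>\<gamma>\<in>weak_comps (I - B) (m - a). G \<gamma>))
      = (\<Sum>a\<le>m. \<Sum>p\<in>weak_comps B a \<times> weak_comps (I - B) (m - a). F (fst p) * G (snd p))"
    by (intro sum.cong refl) (simp add: sum_product sum.cartesian_product case_prod_beta)
  also have "\<dots> = (\<Sum>q\<in>(SIGMA a:{..m}. weak_comps B a \<times> weak_comps (I - B) (m - a)). F (fst (snd q)) * G (snd (snd q)))"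
    by (subst sum.Sigma) (auto simp: finite_weak_comps fin finB case_prod_beta)
  also have "\<dots> = (\<Sum>\<alpha>\<in>weak_comps I m. F (zero_outside B \<alpha>) * G (zero_outside (I - B) \<alpha>))"
    using sum.reindex_bij_betw[OF bij_betw_weak_comps_split[OF fin BI],
        of "\<lambda>q. F (fst (snd q)) * G (snd (snd q))" m] by simp
  finally show ?thesis ..
qed

lemma sum_weak_comps_reindex:
  fixes F :: "(nat \<Rightarrow> nat) \<Rightarrow> real"
  assumes bij: "bij_betw h J I"
  shows "(\<Sum>\<alpha>\<in>weak_comps I m. F \<alpha>) = (\<Sum>\<beta>\<in>weak_comps J m. F (\<lambda>i. if i \<in> I then \<beta> (inv_into J h i) else 0))"
proof (rule sum.reindex_bij_witness[symmetric, of _ "\<lambda>\<alpha> k. if k \<in> J then \<alpha> (h k) else 0" "\<lambda>\<beta> i. if i \<in> I then \<beta> (inv_into J h i) else 0"])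
  have hJ: "h ` J = I" and injh: "inj_on h J" using bij by (auto simp: bij_betw_def)
  have binv: "bij_betw (inv_into J h) I J" using bij by (rule bij_betw_inv_into)
  fix \<beta> assume b: "\<beta> \<in> weak_comps J m"
  then have bz: "\<And>k. k \<notin> J \<Longrightarrow> \<beta> k = 0" and bs: "(\<Sum>k\<in>J. \<beta> k) = m" by (auto simp: weak_comps_def)
  show "(\<lambda>k. if k \<in> J then (if h k \<in> I then \<beta> (inv_into J h (h k)) else 0) else 0) = \<beta>"
    using bz hJ injh by (auto simp: inv_into_f_f)
  have "(\<Sum>i\<in>I. \<beta> (inv_into J h i)) = (\<Sum>k\<in>J. \<beta> k)" by (rule sum.reindex_bij_betw[OF binv])
  then show "(\<lambda>i. if i \<in> I then \<beta> (inv_into J h i) else 0) \<in> weak_comps I m"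
    using bs by (simp add: weak_comps_def)
next
  have hJ: "h ` J = I" and injh: "inj_on h J" using bij by (auto simp: bij_betw_def)
  fix \<alpha> assume a: "\<alpha> \<in> weak_comps I m"
  then have az: "\<And>k. k \<notin> I \<Longrightarrow> \<alpha> k = 0" and as: "(\<Sum>k\<in>I. \<alpha> k) = m" by (auto simp: weak_comps_def)
  show "(\<lambda>i. if i \<in> I then (if inv_into J h i \<in> J then \<alpha> (h (inv_into J h i)) else 0) else 0) = \<alpha>"
    using az hJ by (auto simp: f_inv_into_f inv_into_into)
  have "(\<Sum>k\<in>J. \<alpha> (h k)) = (\<Sum>i\<in>I. \<alpha> i)" by (rule sum.reindex_bij_betw[OF bij])
  then show "(\<lambda>k. if k \<in> J then \<alpha> (h k) else 0) \<in> weak_comps J m"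
    using as by (simp add: weak_comps_def)
qed simp

lemma partition_on_image:
  assumes "partition_on J P" "inj_on h J"
  shows "partition_on (h ` J) ((`) h ` P)"
proof -
  have "partition_on (h ` J) ((`) h ` P - {{}})" by (rule partition_on_inj_image[OF assms])
  moreover have "{} \<notin> (`) h ` P" using assms(1) partition_onD3 by fastforce
  ultimately show ?thesis by simp
qed

lemma sum_partition_on_reindex:
  fixes g :: "nat set \<Rightarrow> real"
  assumes bij: "bij_betw h J I"
  shows "(\<Sum>P | partition_on I P. \<Prod>B\<in>P. g B) = (\<Sum>P | partition_on J P. \<Prod>B\<in>P. g (h ` B))"
proof (rule sum.reindex_bij_witness[symmetric, of _ "\<lambda>P. (`) (inv_into J h) ` P" "\<lambda>P. (`) h ` P"])
  have hJ: "h ` J = I" and injh: "inj_on h J" using bij by (auto simp: bij_betw_def)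
  have binv: "bij_betw (inv_into J h) I J" using bij by (rule bij_betw_inv_into)
  have ij: "inv_into J h ` I = J" and inji: "inj_on (inv_into J h) I" using binv by (auto simp: bij_betw_def)
  {
    fix P assume "P \<in> {P. partition_on J P}"
    then have P: "partition_on J P" by simp
    have sub: "\<And>B. B \<in> P \<Longrightarrow> B \<subseteq> J" using P partition_onD1 by blast
    show "(`) (inv_into J h) ` (`) h ` P = P"
    proof -
      have "inv_into J h ` h ` B = B" if "B \<in> P" for B
        using sub[OF that] injh by (simp add: inv_into_image_cancel)
      then show ?thesis by (simp add: image_image)
    qed
    show "(`) h ` P \<in> {P. partition_on I P}"
      using partition_on_image[OF P injh] hJ by simp
    have injP: "inj_on ((`) h) P"
      by (rule inj_onI) (metis sub injh inj_on_image_eq_iff)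
    show "(\<Prod>B\<in>(`) h ` P. g B) = (\<Prod>B\<in>P. g (h ` B))"
      by (simp add: prod.reindex[OF injP])
  }
  {
    fix P assume "P \<in> {P. partition_on I P}"
    then have P: "partition_on I P" by simp
    have sub: "B \<subseteq> I" if "B \<in> P" for B using P partition_onD1 that by blast
    show "(`) h ` (`) (inv_into J h) ` P = P"
    proof -
      have "h ` inv_into J h ` B = B" if "B \<in> P" for B
        by (rule image_inv_into_cancel[OF hJ sub[OF that]])
      then show ?thesis by (simp add: image_image)
    qed
    show "(`) (inv_into J h) ` P \<in> {P. partition_on J P}"
      using partition_on_image[OF P inji] ij by simp
  }
qed

definition partition_sum :: "(nat \<Rightarrow> nat \<Rightarrow> real) \<Rightarrow> nat set \<Rightarrow> (nat \<Rightarrow> nat) \<Rightarrow> real" where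
  "partition_sum w I \<alpha> = (\<Sum>P | partition_on I P. \<Prod>B\<in>P. w (\<Sum>i\<in>B. \<alpha> i) (card B))"

lemma partition_sum_reindex:
  assumes bij: "bij_betw h J I"
  shows "partition_sum w I \<alpha> = partition_sum w J (\<lambda>j. \<alpha> (h j))"
proof -
  have injh: "inj_on h J" using bij by (auto simp: bij_betw_def)
  have "partition_sum w I \<alpha> = (\<Sum>P | partition_on J P. \<Prod>B\<in>P. w (\<Sum>i\<in>h ` B. \<alpha> i) (card (h ` B)))"
    unfolding partition_sum_def by (rule sum_partition_on_reindex[OF bij])
  also have "\<dots> = partition_sum w J (\<lambda>j. \<alpha> (h j))"
    unfolding partition_sum_def
  proof (intro sum.cong refl prod.cong)
    fix P B assume "P \<in> {P. partition_on J P}" "B \<in> P"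
    then have "B \<subseteq> J" using partition_onD1 by blast
    then have ib: "inj_on h B" using injh inj_on_subset by blast
    show "w (\<Sum>i\<in>h ` B. \<alpha> i) (card (h ` B)) = w (\<Sum>j\<in>B. \<alpha> (h j)) (card B)"
      by (simp add: sum.reindex[OF ib] card_image[OF ib])
  qed
  finally show ?thesis .
qed

lemma sum_partition_on_remove_block:
  fixes f :: "nat set \<Rightarrow> nat set set \<Rightarrow> real"
  assumes fin: "finite I"
  shows "(\<Sum>P | partition_on I P. \<Sum>B\<in>P. f B (P - {B})) =
         (\<Sum>B | B \<subseteq> I \<and> B \<noteq> {}. \<Sum>Q | partition_on (I - B) Q. f B Q)"
proof -
  have f1: "finite {P. partition_on I P}" using fin by (rule finitely_many_partition_on)
  have f2: "finite {B. B \<subseteq> I \<and> B \<noteq> {}}" by (rule finite_subset[of _ "Pow I"]) (use fin in auto)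
  have "(\<Sum>P | partition_on I P. \<Sum>B\<in>P. f B (P - {B})) = (\<Sum>q\<in>Sigma {P. partition_on I P} (\<lambda>P. P). f (snd q) (fst q - {snd q}))"
    using f1 fin finite_elements by (subst sum.Sigma) (auto simp: case_prod_beta)
  also have "\<dots> = (\<Sum>q\<in>Sigma {B. B \<subseteq> I \<and> B \<noteq> {}} (\<lambda>B. {Q. partition_on (I - B) Q}). f (fst q) (snd q))"
  proof (rule sum.reindex_bij_witness[of _ "\<lambda>q. (insert (fst q) (snd q), fst q)" "\<lambda>q. (snd q, fst q - {snd q})"])
    fix q assume "q \<in> Sigma {P. partition_on I P} (\<lambda>P. P)"
    then obtain P B where q: "q = (P, B)" and P: "partition_on I P" and B: "B \<in> P" by auto
    have d: "disjnt B (\<Union>(P - {B}))"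
      using P B unfolding partition_on_def disjoint_def disjnt_def by blast
    have ins: "insert B (P - {B}) = P" using B by blast
    have "partition_on (I - B) (P - {B}) \<and> B \<subseteq> I \<and> B \<noteq> {}"
      using partition_on_insert[OF d, of I] P ins by simp
    then show "(snd q, fst q - {snd q}) \<in> Sigma {B. B \<subseteq> I \<and> B \<noteq> {}} (\<lambda>B. {Q. partition_on (I - B) Q})"
      using q by simp
    show "(insert (fst (snd q, fst q - {snd q})) (snd (snd q, fst q - {snd q})), fst (snd q, fst q - {snd q})) = q"
      using q ins by simp
    show "f (fst (snd q, fst q - {snd q})) (snd (snd q, fst q - {snd q})) = f (snd q) (fst q - {snd q})" by simp
  next
    fix q assume "q \<in> Sigma {B. B \<subseteq> I \<and> B \<noteq> {}} (\<lambda>B. {Q. partition_on (I - B) Q})"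
    then obtain B Q where q: "q = (B, Q)" and B: "B \<subseteq> I" "B \<noteq> {}" and Q: "partition_on (I - B) Q" by auto
    have U: "\<Union>Q = I - B" using Q partition_onD1 by blast
    have d: "disjnt B (\<Union>Q)" using U by (simp add: disjnt_def)
    have nB: "B \<notin> Q" using U B(2) by blast
    have "partition_on I (insert B Q)" using partition_on_insert[OF d, of I] Q B by simp
    then show "(insert (fst q) (snd q), fst q) \<in> Sigma {P. partition_on I P} (\<lambda>P. P)" using q by simp
    show "(snd (insert (fst q) (snd q), fst q), fst (insert (fst q) (snd q), fst q) - {snd (insert (fst q) (snd q), fst q)}) = q"
      using q nB by auto
  qed
  also have "\<dots> = (\<Sum>B | B \<subseteq> I \<and> B \<noteq> {}. \<Sum>Q | partition_on (I - B) Q. f B Q)"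
    using f2 fin by (subst sum.Sigma) (auto intro: finitely_many_partition_on simp: case_prod_beta)
  finally show ?thesis .
qed

lemma sum_partition_on_blocks:
  fixes g :: "'a \<Rightarrow> 'b::comm_monoid_add"
  assumes P: "partition_on I P" and fin: "finite I"
  shows "(\<Sum>B\<in>P. \<Sum>i\<in>B. g i) = (\<Sum>i\<in>I. g i)"
proof -
  have finB: "\<And>B. B \<in> P \<Longrightarrow> finite B" using P fin partition_onD1 finite_subset by (metis Union_upper)
  have "(\<Sum>i\<in>I. g i) = (\<Sum>i\<in>\<Union>P. g i)" using P partition_onD1 by metis
  also have "\<dots> = (\<Sum>B\<in>P. \<Sum>i\<in>B. g i)"
    using sum.Union_disjoint[of P g] finB P by (auto simp: partition_on_def disjoint_def)
  finally show ?thesis by simp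
qed

lemma partition_sum_remove_block:
  assumes fin: "finite I"
  shows "of_nat (\<Sum>i\<in>I. \<alpha> i) * partition_sum w I \<alpha> =
    (\<Sum>B | B \<subseteq> I \<and> B \<noteq> {}. of_nat (\<Sum>i\<in>B. \<alpha> i) * w (\<Sum>i\<in>B. \<alpha> i) (card B) * partition_sum w (I - B) \<alpha>)"
proof -
  let ?W = "\<lambda>B. w (\<Sum>i\<in>B. \<alpha> i) (card B)"
  have "of_nat (\<Sum>i\<in>I. \<alpha> i) * (\<Prod>B\<in>P. ?W B) = (\<Sum>B\<in>P. of_nat (\<Sum>i\<in>B. \<alpha> i) * ?W B * (\<Prod>B'\<in>P - {B}. ?W B'))"
    if P: "partition_on I P" for P
  proof -
    have "finite P" using P fin finite_elements by blast
    then have "(\<Prod>B\<in>P. ?W B) = ?W B * (\<Prod>B'\<in>P - {B}. ?W B')" if "B \<in> P" for B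
      using that by (simp add: prod.remove)
    then show ?thesis
      unfolding sum_partition_on_blocks[OF P fin, symmetric] of_nat_sum sum_distrib_right
      by (intro sum.cong) (simp_all add: mult.assoc)
  qed
  then have "of_nat (\<Sum>i\<in>I. \<alpha> i) * partition_sum w I \<alpha>
      = (\<Sum>P | partition_on I P. \<Sum>B\<in>P. of_nat (\<Sum>i\<in>B. \<alpha> i) * ?W B * (\<Prod>B'\<in>P - {B}. ?W B'))"
    unfolding partition_sum_def sum_distrib_left by (intro sum.cong) auto
  also have "\<dots> = (\<Sum>B | B \<subseteq> I \<and> B \<noteq> {}. \<Sum>Q | partition_on (I - B) Q.
      of_nat (\<Sum>i\<in>B. \<alpha> i) * ?W B * (\<Prod>B'\<in>Q. ?W B'))"
    by (rule sum_partition_on_remove_block[OF fin])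
  finally show ?thesis unfolding partition_sum_def by (simp add: sum_distrib_left)
qed

definition comp_prod :: "(nat \<Rightarrow> real) \<Rightarrow> nat set \<Rightarrow> (nat \<Rightarrow> nat) \<Rightarrow> real" where
  "comp_prod e I \<alpha> = (\<Prod>i\<in>I. e (\<alpha> i))"

definition part_comp_sum :: "(nat \<Rightarrow> nat \<Rightarrow> real) \<Rightarrow> (nat \<Rightarrow> real) \<Rightarrow> nat set \<Rightarrow> nat \<Rightarrow> real" where
  "part_comp_sum w e I m = (\<Sum>\<alpha>\<in>weak_comps I m. partition_sum w I \<alpha> * comp_prod e I \<alpha>)"

definition comp_prod_sum :: "(nat \<Rightarrow> real) \<Rightarrow> nat set \<Rightarrow> nat \<Rightarrow> real" where
  "comp_prod_sum e B a = (\<Sum>\<beta>\<in>weak_comps B a. comp_prod e B \<beta>)"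

lemma partition_sum_cong: "(\<And>i. i \<in> I \<Longrightarrow> \<alpha> i = \<beta> i) \<Longrightarrow> partition_sum w I \<alpha> = partition_sum w I \<beta>"
  unfolding partition_sum_def
proof (intro sum.cong refl prod.cong)
  fix P B assume h: "\<And>i. i \<in> I \<Longrightarrow> \<alpha> i = \<beta> i" and "P \<in> {P. partition_on I P}" "B \<in> P"
  then have "B \<subseteq> I" using partition_onD1 by blast
  then show "w (\<Sum>i\<in>B. \<alpha> i) (card B) = w (\<Sum>i\<in>B. \<beta> i) (card B)"
    using h by (metis (no_types, lifting) subsetD sum.cong)
qed

lemma comp_prod_cong: "(\<And>i. i \<in> I \<Longrightarrow> \<alpha> i = \<beta> i) \<Longrightarrow> comp_prod e I \<alpha> = comp_prod e I \<beta>"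
  unfolding comp_prod_def by simp

lemma part_comp_sum_rec:
  assumes fin: "finite I"
  shows "of_nat m * part_comp_sum w e I m = (\<Sum>B | B \<subseteq> I \<and> B \<noteq> {}. \<Sum>a\<le>m.
    (of_nat a * w a (card B) * comp_prod_sum e B a) * part_comp_sum w e (I - B) (m - a))"
proof -
  define F where "F B \<beta> = of_nat (\<Sum>i\<in>B. \<beta> i) * w (\<Sum>i\<in>B. \<beta> i) (card B) * comp_prod e B \<beta>" for B \<beta>
  define G where "G B \<gamma> = partition_sum w (I - B) \<gamma> * comp_prod e (I - B) \<gamma>" for B \<gamma>
  have split: "of_nat m * (partition_sum w I \<alpha> * comp_prod e I \<alpha>)
      = (\<Sum>B | B \<subseteq> I \<and> B \<noteq> {}. F B (zero_outside B \<alpha>) * G B (zero_outside (I - B) \<alpha>))"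
    if "\<alpha> \<in> weak_comps I m" for \<alpha>
  proof -
    have block: "F B (zero_outside B \<alpha>) * G B (zero_outside (I - B) \<alpha>)
        = of_nat (\<Sum>i\<in>B. \<alpha> i) * w (\<Sum>i\<in>B. \<alpha> i) (card B) * partition_sum w (I - B) \<alpha> * comp_prod e I \<alpha>"
      if B: "B \<subseteq> I" for B
    proof -
      have "comp_prod e I \<alpha> = comp_prod e B \<alpha> * comp_prod e (I - B) \<alpha>"
        unfolding comp_prod_def using prod.subset_diff[OF B fin] by (simp add: mult.commute)
      moreover have "comp_prod e B (zero_outside B \<alpha>) = comp_prod e B \<alpha>"
        "comp_prod e (I - B) (zero_outside (I - B) \<alpha>) = comp_prod e (I - B) \<alpha>"
        "partition_sum w (I - B) (zero_outside (I - B) \<alpha>) = partition_sum w (I - B) \<alpha>"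
        by (auto intro: comp_prod_cong partition_sum_cong simp: zero_outside_def)
      ultimately show ?thesis unfolding F_def G_def by (simp add: zero_outside_def)
    qed
    have "m = (\<Sum>i\<in>I. \<alpha> i)" using that by (simp add: weak_comps_def)
    then have "of_nat m * (partition_sum w I \<alpha> * comp_prod e I \<alpha>)
        = (of_nat (\<Sum>i\<in>I. \<alpha> i) * partition_sum w I \<alpha>) * comp_prod e I \<alpha>"
      by (simp only: mult.assoc)
    also have "\<dots> = (\<Sum>B | B \<subseteq> I \<and> B \<noteq> {}.
        of_nat (\<Sum>i\<in>B. \<alpha> i) * w (\<Sum>i\<in>B. \<alpha> i) (card B) * partition_sum w (I - B) \<alpha> * comp_prod e I \<alpha>)"
      by (simp only: partition_sum_remove_block[OF fin] sum_distrib_right)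
    also have "\<dots> = (\<Sum>B | B \<subseteq> I \<and> B \<noteq> {}. F B (zero_outside B \<alpha>) * G B (zero_outside (I - B) \<alpha>))"
      using block by (intro sum.cong) auto
    finally show ?thesis .
  qed
  have "of_nat m * part_comp_sum w e I m
      = (\<Sum>\<alpha>\<in>weak_comps I m. \<Sum>B | B \<subseteq> I \<and> B \<noteq> {}. F B (zero_outside B \<alpha>) * G B (zero_outside (I - B) \<alpha>))"
    unfolding part_comp_sum_def sum_distrib_left using split by (rule sum.cong[OF refl])
  also have "\<dots> = (\<Sum>B | B \<subseteq> I \<and> B \<noteq> {}. \<Sum>a\<le>m.
      (\<Sum>\<beta>\<in>weak_comps B a. F B \<beta>) * (\<Sum>\<gamma>\<in>weak_comps (I - B) (m - a). G B \<gamma>))"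
    by (subst sum.swap) (intro sum.cong refl sum_weak_comps_split fin; simp)
  also have "\<dots> = (\<Sum>B | B \<subseteq> I \<and> B \<noteq> {}. \<Sum>a\<le>m.
      (of_nat a * w a (card B) * comp_prod_sum e B a) * part_comp_sum w e (I - B) (m - a))"
    unfolding comp_prod_sum_def part_comp_sum_def G_def sum_distrib_left
    by (intro sum.cong refl) (simp add: F_def weak_comps_def)
  finally show ?thesis .
qed

lemma comp_prod_reindex:
  assumes "bij_betw h J I"
  shows "comp_prod e I \<alpha> = comp_prod e J (\<lambda>j. \<alpha> (h j))"
  unfolding comp_prod_def using prod.reindex_bij_betw[OF assms, of "\<lambda>i. e (\<alpha> i)"] by simp

lemma part_comp_sum_bij_betw:
  assumes bij: "bij_betw h J I"
  shows "part_comp_sum w e I m = part_comp_sum w e J m"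
proof -
  let ?a = "\<lambda>\<beta> i. if i \<in> I then \<beta> (inv_into J h i) else 0"
  have h_J: "h j \<in> I" "inv_into J h (h j) = j" if "j \<in> J" for j
    using that bij by (auto simp: bij_betw_def inv_into_f_f)
  have "part_comp_sum w e I m = (\<Sum>\<beta>\<in>weak_comps J m. partition_sum w I (?a \<beta>) * comp_prod e I (?a \<beta>))"
    unfolding part_comp_sum_def by (rule sum_weak_comps_reindex[OF bij])
  also have "\<dots> = part_comp_sum w e J m"
    unfolding part_comp_sum_def partition_sum_reindex[OF bij] comp_prod_reindex[OF bij]
    by (intro sum.cong refl arg_cong2[where f = "(*)"] partition_sum_cong comp_prod_cong) (simp_all add: h_J)
  finally show ?thesis .
qed

lemma comp_prod_sum_bij_betw:
  assumes bij: "bij_betw h J I"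
  shows "comp_prod_sum e I m = comp_prod_sum e J m"
proof -
  let ?a = "\<lambda>\<beta> i. if i \<in> I then \<beta> (inv_into J h i) else 0"
  have h_J: "h j \<in> I" "inv_into J h (h j) = j" if "j \<in> J" for j
    using that bij by (auto simp: bij_betw_def inv_into_f_f)
  have "comp_prod_sum e I m = (\<Sum>\<beta>\<in>weak_comps J m. comp_prod e I (?a \<beta>))"
    unfolding comp_prod_sum_def by (rule sum_weak_comps_reindex[OF bij])
  also have "\<dots> = comp_prod_sum e J m"
    unfolding comp_prod_sum_def comp_prod_reindex[OF bij]
    by (intro sum.cong refl comp_prod_cong) (simp add: h_J)
  finally show ?thesis .
qed

lemma part_comp_sum_card: "finite I \<Longrightarrow> part_comp_sum w e I m = part_comp_sum w e {..<card I} m"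
  using ex_bij_betw_nat_finite[of I] part_comp_sum_bij_betw by (metis atLeast0LessThan)

lemma comp_prod_sum_card: "finite I \<Longrightarrow> comp_prod_sum e I m = comp_prod_sum e {..<card I} m"
  using ex_bij_betw_nat_finite[of I] comp_prod_sum_bij_betw by (metis atLeast0LessThan)

lemma comp_prod_eq_0:
  assumes e0: "e 0 = 0" and fin: "finite I" and a: "\<alpha> \<in> weak_comps I m" and c: "m < card I"
  shows "comp_prod e I \<alpha> = 0"
proof -
  have "\<exists>i\<in>I. \<alpha> i = 0"
  proof (rule ccontr)
    assume "\<not> ?thesis"
    then have "\<forall>i\<in>I. 1 \<le> \<alpha> i" by (simp add: Suc_le_eq)
    then have "(\<Sum>i\<in>I. (1::nat)) \<le> (\<Sum>i\<in>I. \<alpha> i)" by (intro sum_mono) auto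
    then have "card I \<le> m" using a by (simp add: weak_comps_def)
    then show False using c by simp
  qed
  then show ?thesis unfolding comp_prod_def using e0 fin by (metis prod_zero_iff)
qed

lemma part_comp_sum_eq_0: "e 0 = 0 \<Longrightarrow> m < l \<Longrightarrow> part_comp_sum w e {..<l} m = 0"
  unfolding part_comp_sum_def by (intro sum.neutral ballI) (simp add: comp_prod_eq_0)

lemma comp_prod_sum_eq_0: "e 0 = 0 \<Longrightarrow> m < l \<Longrightarrow> comp_prod_sum e {..<l} m = 0"
  unfolding comp_prod_sum_def by (intro sum.neutral ballI) (simp add: comp_prod_eq_0)

lemma weak_comps_singleton: "weak_comps {r} k = {(\<lambda>i. if i = r then k else 0)}"
  unfolding weak_comps_def by auto

lemma comp_prod_sum_eq_power_nth: "comp_prod_sum e {..<r} a = (Abs_fps e ^ r) $ a"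
proof (induction r arbitrary: a)
  case 0
  have "weak_comps {} a = (if a = 0 then {\<lambda>i. 0} else {})" unfolding weak_comps_def by auto
  then show ?case by (simp add: comp_prod_sum_def comp_prod_def)
next
  case (Suc r)
  have fin: "finite {..<Suc r}" by simp
  have sub: "{..<r} \<subseteq> {..<Suc r}" by auto
  have d: "{..<Suc r} - {..<r} = {r}" by auto
  let ?last = "\<lambda>\<gamma>. e (\<gamma> r)"
  have "comp_prod e {..<Suc r} \<alpha>
      = comp_prod e {..<r} (zero_outside {..<r} \<alpha>) * ?last (zero_outside ({..<Suc r} - {..<r}) \<alpha>)" for \<alpha>
  proof -
    have "comp_prod e {..<r} (zero_outside {..<r} \<alpha>) = comp_prod e {..<r} \<alpha>"
      by (rule comp_prod_cong) (simp add: zero_outside_def)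
    then show ?thesis by (simp add: comp_prod_def zero_outside_def d)
  qed
  then have "comp_prod_sum e {..<Suc r} a = (\<Sum>\<alpha>\<in>weak_comps {..<Suc r} a.
      comp_prod e {..<r} (zero_outside {..<r} \<alpha>) * ?last (zero_outside ({..<Suc r} - {..<r}) \<alpha>))"
    unfolding comp_prod_sum_def by simp
  also have "\<dots> = (\<Sum>i\<le>a. comp_prod_sum e {..<r} i * (\<Sum>\<gamma>\<in>weak_comps ({..<Suc r} - {..<r}) (a - i). ?last \<gamma>))"
    unfolding comp_prod_sum_def by (rule sum_weak_comps_split[OF fin sub])
  also have "\<dots> = (\<Sum>i\<le>a. (Abs_fps e ^ r) $ i * Abs_fps e $ (a - i))"
    by (intro sum.cong refl) (simp add: d weak_comps_singleton Suc.IH)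
  also have "\<dots> = (Abs_fps e ^ Suc r) $ a"
    unfolding power_Suc2 fps_mult_nth atLeast0AtMost by simp
  finally show ?case .
qed

lemma sum_nonempty_subsets_by_card:
  fixes \<phi> :: "nat \<Rightarrow> real"
  assumes fin: "finite I"
  shows "(\<Sum>B | B \<subseteq> I \<and> B \<noteq> {}. \<phi> (card B)) = (\<Sum>r\<in>{1..card I}. of_nat (card I choose r) * \<phi> r)"
proof -
  let ?S = "{B. B \<subseteq> I \<and> B \<noteq> {}}"
  have fS: "finite ?S" by (rule finite_subset[of _ "Pow I"]) (use fin in auto)
  have img: "card ` ?S \<subseteq> {1..card I}"
  proof
    fix r assume "r \<in> card ` ?S"
    then obtain B where B: "B \<subseteq> I" "B \<noteq> {}" "r = card B" by blast
    have "finite B" using B fin finite_subset by blast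
    then show "r \<in> {1..card I}" using B card_mono[OF fin B(1)] by (simp add: Suc_le_eq card_gt_0_iff)
  qed
  have "(\<Sum>B\<in>?S. \<phi> (card B)) = (\<Sum>r\<in>{1..card I}. \<Sum>B\<in>{B \<in> ?S. card B = r}. \<phi> (card B))"
    by (rule sum.group[OF fS _ img, symmetric]) simp
  also have "\<dots> = (\<Sum>r\<in>{1..card I}. of_nat (card I choose r) * \<phi> r)"
  proof (intro sum.cong refl)
    fix r assume r: "r \<in> {1..card I}"
    have "{B \<in> ?S. card B = r} = {B. B \<subseteq> I \<and> card B = r}" using r by auto
    then have "(\<Sum>B\<in>{B \<in> ?S. card B = r}. \<phi> (card B)) = (\<Sum>B\<in>{B. B \<subseteq> I \<and> card B = r}. \<phi> r)" by simp
    also have "\<dots> = of_nat (card I choose r) * \<phi> r" using n_subsets[OF fin, of r] by simp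
    finally show "(\<Sum>B\<in>{B \<in> ?S. card B = r}. \<phi> (card B)) = of_nat (card I choose r) * \<phi> r" .
  qed
  finally show ?thesis by simp
qed

lemma part_comp_sum_lessThan_rec:
  "of_nat m * (part_comp_sum w e {..<l} m / fact l) = (\<Sum>r\<in>{1..l}. \<Sum>a\<le>m.
    (of_nat a * w a r * comp_prod_sum e {..<r} a / fact r) * (part_comp_sum w e {..<l - r} (m - a) / fact (l - r)))"
proof -
  let ?f = "\<lambda>r. \<Sum>a\<le>m. of_nat a * w a r * comp_prod_sum e {..<r} a * part_comp_sum w e {..<l - r} (m - a)"
  have "of_nat m * part_comp_sum w e {..<l} m = (\<Sum>B | B \<subseteq> {..<l} \<and> B \<noteq> {}. \<Sum>a\<le>m.
      (of_nat a * w a (card B) * comp_prod_sum e B a) * part_comp_sum w e ({..<l} - B) (m - a))"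
    by (rule part_comp_sum_rec) simp
  also have "\<dots> = (\<Sum>B | B \<subseteq> {..<l} \<and> B \<noteq> {}. ?f (card B))"
  proof (rule sum.cong[OF refl])
    fix B assume B: "B \<in> {B. B \<subseteq> {..<l} \<and> B \<noteq> {}}"
    then have fB: "finite B" using finite_subset by blast
    have "card ({..<l} - B) = l - card B" using B fB by (simp add: card_Diff_subset)
    then show "(\<Sum>a\<le>m. (of_nat a * w a (card B) * comp_prod_sum e B a) * part_comp_sum w e ({..<l} - B) (m - a))
        = ?f (card B)"
      using comp_prod_sum_card[OF fB] part_comp_sum_card[of "{..<l} - B"] by simp
  qed
  also have "\<dots> = (\<Sum>r\<in>{1..l}. of_nat (l choose r) * ?f r)"
    using sum_nonempty_subsets_by_card[of "{..<l}"] by simp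
  finally have "of_nat m * (part_comp_sum w e {..<l} m / fact l) = (\<Sum>r\<in>{1..l}. of_nat (l choose r) / fact l * ?f r)"
    by (simp add: sum_divide_distrib)
  also have "\<dots> = (\<Sum>r\<in>{1..l}. ?f r / (fact r * fact (l - r)))"
    using binomial_fact by (intro sum.cong) (auto simp: divide_simps)
  finally show ?thesis by (simp add: sum_divide_distrib)
qed

definition exp_part_sum :: "(nat \<Rightarrow> nat \<Rightarrow> real) \<Rightarrow> (nat \<Rightarrow> real) \<Rightarrow> nat \<Rightarrow> real" where
  "exp_part_sum w e m = (\<Sum>l\<le>m. part_comp_sum w e {..<l} m / fact l)"

lemma sum_triangle_reindex:
  fixes \<Phi> :: "nat \<Rightarrow> nat \<Rightarrow> 'a::comm_monoid_add"
  assumes van: "\<And>r l'. m < r + l' \<Longrightarrow> \<Phi> r l' = 0"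
  shows "(\<Sum>l\<le>m. \<Sum>r\<in>{1..l}. \<Phi> r (l - r)) = (\<Sum>r\<in>{1..m}. \<Sum>l'\<le>m. \<Phi> r l')"
proof -
  have "(\<Sum>l\<le>m. \<Sum>r\<in>{1..l}. \<Phi> r (l - r)) = (\<Sum>l\<le>m. \<Sum>r\<in>{1..m}. if r \<le> l then \<Phi> r (l - r) else 0)"
  proof (rule sum.cong[OF refl])
    fix l assume "l \<in> {..m}"
    then have "{1..l} \<subseteq> {1..m}" by auto
    then show "(\<Sum>r\<in>{1..l}. \<Phi> r (l - r)) = (\<Sum>r\<in>{1..m}. if r \<le> l then \<Phi> r (l - r) else 0)"
      by (subst sum.mono_neutral_cong_left[of "{1..m}" "{1..l}"]) auto
  qed
  also have "\<dots> = (\<Sum>r\<in>{1..m}. \<Sum>l\<le>m. if r \<le> l then \<Phi> r (l - r) else 0)" by (rule sum.swap)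
  also have "\<dots> = (\<Sum>r\<in>{1..m}. \<Sum>l'\<le>m. \<Phi> r l')"
  proof (rule sum.cong[OF refl])
    fix r assume r: "r \<in> {1..m}"
    have "(\<Sum>l\<le>m. if r \<le> l then \<Phi> r (l - r) else 0) = (\<Sum>l\<in>{r..m}. \<Phi> r (l - r))"
      by (subst sum.mono_neutral_cong_right[of "{..m}" "{r..m}"]) auto
    also have "\<dots> = (\<Sum>l'\<in>{0..m - r}. \<Phi> r l')"
      using sum.shift_bounds_cl_nat_ivl[of "\<lambda>l. \<Phi> r (l - r)" 0 r "m - r"] r by simp
    also have "\<dots> = (\<Sum>l'\<le>m. \<Phi> r l')"
      by (subst sum.mono_neutral_cong_left[of "{..m}" "{0..m - r}"]) (auto intro!: van)
    finally show "(\<Sum>l\<le>m. if r \<le> l then \<Phi> r (l - r) else 0) = (\<Sum>l'\<le>m. \<Phi> r l')" .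
  qed
  finally show ?thesis .
qed

text \<open>With Z_m = exp_part_sum w e m and H_a = sum_r w a r [s^a] (sum_j e j s^j)^r / r!, this is
  the recursion m Z_m = sum_a a H_a Z_(m-a), which characterises Z = exp H.\<close>

lemma exp_part_sum_rec:
  assumes e0: "e 0 = 0"
  shows "of_nat m * exp_part_sum w e m = (\<Sum>a\<in>{1..m}.
    (\<Sum>r\<in>{1..a}. of_nat a * w a r * comp_prod_sum e {..<r} a / fact r) * exp_part_sum w e (m - a))"
proof -
  define T where "T r l' a = (of_nat a * w a r * comp_prod_sum e {..<r} a / fact r) *
    (part_comp_sum w e {..<l'} (m - a) / fact l')" for r l' a
  have T_eq_0: "T r l' a = 0" if "a < r \<or> m - a < l'" for r l' a
    using that comp_prod_sum_eq_0[of e a r] part_comp_sum_eq_0[of e "m - a" l' w] e0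
    unfolding T_def by auto
  have "of_nat m * exp_part_sum w e m = (\<Sum>l\<le>m. \<Sum>r\<in>{1..l}. \<Sum>a\<le>m. T r (l - r) a)"
    unfolding exp_part_sum_def sum_distrib_left T_def part_comp_sum_lessThan_rec ..
  also have "\<dots> = (\<Sum>r\<in>{1..m}. \<Sum>l'\<le>m. \<Sum>a\<le>m. T r l' a)"
    by (rule sum_triangle_reindex) (auto intro!: sum.neutral T_eq_0)
  also have "\<dots> = (\<Sum>a\<le>m. \<Sum>r\<in>{1..m}. \<Sum>l'\<le>m. T r l' a)"
  proof -
    have "(\<Sum>r\<in>{1..m}. \<Sum>l'\<le>m. \<Sum>a\<le>m. T r l' a) = (\<Sum>r\<in>{1..m}. \<Sum>a\<le>m. \<Sum>l'\<le>m. T r l' a)"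
      by (rule sum.cong[OF refl], rule sum.swap)
    also have "\<dots> = (\<Sum>a\<le>m. \<Sum>r\<in>{1..m}. \<Sum>l'\<le>m. T r l' a)" by (rule sum.swap)
    finally show ?thesis .
  qed
  also have "\<dots> = (\<Sum>a\<in>{1..m}. \<Sum>r\<in>{1..a}. \<Sum>l'\<le>m - a. T r l' a)"
  proof -
    have "(\<Sum>r\<in>{1..m}. \<Sum>l'\<le>m. T r l' a) = (\<Sum>r\<in>{1..a}. \<Sum>l'\<le>m - a. T r l' a)" if "a \<le> m" for a
      using that by (intro sum.mono_neutral_cong_right ballI) (auto intro!: sum.neutral T_eq_0)
    moreover have "(\<Sum>a\<le>m. f a) = (\<Sum>a\<in>{1..m}. f a)" if "f 0 = 0" for f :: "nat \<Rightarrow> real"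
      using that by (intro sum.mono_neutral_cong_right) (auto simp: Suc_le_eq)
    ultimately show ?thesis by (simp add: T_def)
  qed
  also have "\<dots> = (\<Sum>a\<in>{1..m}. (\<Sum>r\<in>{1..a}. of_nat a * w a r * comp_prod_sum e {..<r} a / fact r) * exp_part_sum w e (m - a))"
    unfolding exp_part_sum_def T_def sum_product ..
  finally show ?thesis .
qed

lemma exp_part_sum_0: "exp_part_sum w e 0 = 1"
proof -
  have c: "weak_comps {} 0 = {\<lambda>i. 0}" unfolding weak_comps_def by auto
  have p: "{P. partition_on {} P} = {{}}" by (auto simp: partition_on_empty)
  show ?thesis unfolding exp_part_sum_def part_comp_sum_def partition_sum_def comp_prod_def by (simp add: c p)
qed

section \<open>Grouping compositions by integer partitions\<close>

lemma length_le_sum_list: "0 \<notin> set xs \<Longrightarrow> length xs \<le> sum_list (xs :: nat list)"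
  by (induction xs) auto

lemma partitions_of_subset: "partitions_of m \<subseteq> {xs. set xs \<subseteq> {..m} \<and> length xs \<le> m}"
  unfolding partitions_of_def is_partition_def using member_le_sum_list length_le_sum_list by fastforce

lemma finite_partitions_of: "finite (partitions_of m)"
  by (rule finite_subset[OF partitions_of_subset]) (rule finite_lists_length_le, simp)

lemma is_partition_rev_sort: "0 \<notin> set xs \<Longrightarrow> is_partition (rev (sort xs))"
  unfolding is_partition_def by (simp add: sorted_wrt_rev)

definition lists_len_sum :: "nat \<Rightarrow> nat \<Rightarrow> nat list set" where
  "lists_len_sum l m = {xs. length xs = l \<and> sum_list xs = m}"

definition pos_lists_len_sum :: "nat \<Rightarrow> nat \<Rightarrow> nat list set" where
  "pos_lists_len_sum l m = {xs. length xs = l \<and> sum_list xs = m \<and> 0 \<notin> set xs}"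

definition list_weight :: "(nat \<Rightarrow> nat \<Rightarrow> real) \<Rightarrow> (nat \<Rightarrow> real) \<Rightarrow> nat list \<Rightarrow> real" where
  "list_weight w e xs = partition_sum w {..<length xs} (\<lambda>i. xs ! i) * comp_prod e {..<length xs} (\<lambda>i. xs ! i)"

lemma finite_lists_len_sum: "finite (lists_len_sum l m)"
proof (rule finite_subset[of _ "{xs. set xs \<subseteq> {..m} \<and> length xs \<le> l}"])
  show "lists_len_sum l m \<subseteq> {xs. set xs \<subseteq> {..m} \<and> length xs \<le> l}"
    unfolding lists_len_sum_def using member_le_sum_list by fastforce
  show "finite {xs. set xs \<subseteq> {..m} \<and> length xs \<le> l}" by (rule finite_lists_length_le) simp
qed

lemma pos_lists_len_sum_subset: "pos_lists_len_sum l m \<subseteq> lists_len_sum l m"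
  unfolding pos_lists_len_sum_def lists_len_sum_def by auto

lemma part_comp_sum_eq_sum_lists:
  assumes e0: "e 0 = 0"
  shows "part_comp_sum w e {..<l} m = (\<Sum>xs\<in>pos_lists_len_sum l m. list_weight w e xs)"
proof -
  have "part_comp_sum w e {..<l} m = (\<Sum>xs\<in>lists_len_sum l m. list_weight w e xs)"
    unfolding part_comp_sum_def
  proof (rule sum.reindex_bij_witness[of _ "\<lambda>xs i. if i < l then xs ! i else 0" "\<lambda>\<alpha>. map \<alpha> [0..<l]"])
    fix \<alpha> assume a: "\<alpha> \<in> weak_comps {..<l} m"
    then have z: "\<And>i. i \<ge> l \<Longrightarrow> \<alpha> i = 0" and s: "(\<Sum>i<l. \<alpha> i) = m" by (auto simp: weak_comps_def)
    show "(\<lambda>i. if i < l then map \<alpha> [0..<l] ! i else 0) = \<alpha>" using z by (auto simp: not_less)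
    show "map \<alpha> [0..<l] \<in> lists_len_sum l m"
      using s by (simp add: lists_len_sum_def sum_list_sum_nth atLeast0LessThan)
    have "partition_sum w {..<l} \<alpha> = partition_sum w {..<l} (\<lambda>i. map \<alpha> [0..<l] ! i)"
      by (rule partition_sum_cong) simp
    moreover have "comp_prod e {..<l} \<alpha> = comp_prod e {..<l} (\<lambda>i. map \<alpha> [0..<l] ! i)"
      by (rule comp_prod_cong) simp
    ultimately show "list_weight w e (map \<alpha> [0..<l]) = partition_sum w {..<l} \<alpha> * comp_prod e {..<l} \<alpha>"
      by (simp add: list_weight_def)
  next
    fix xs assume "xs \<in> lists_len_sum l m"
    then have l: "length xs = l" and s: "sum_list xs = m" by (auto simp: lists_len_sum_def)
    show "map (\<lambda>i. if i < l then xs ! i else 0) [0..<l] = xs" using l by (simp add: list_eq_iff_nth_eq)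
    have "(\<Sum>i<l. if i < l then xs ! i else 0) = m" using s l by (simp add: sum_list_sum_nth atLeast0LessThan)
    then show "(\<lambda>i. if i < l then xs ! i else 0) \<in> weak_comps {..<l} m" by (simp add: weak_comps_def)
  qed
  also have "\<dots> = (\<Sum>xs\<in>pos_lists_len_sum l m. list_weight w e xs)"
  proof (rule sum.mono_neutral_right[OF finite_lists_len_sum pos_lists_len_sum_subset, symmetric, THEN sym])
    show "\<forall>xs\<in>lists_len_sum l m - pos_lists_len_sum l m. list_weight w e xs = 0"
    proof
      fix xs assume "xs \<in> lists_len_sum l m - pos_lists_len_sum l m"
      then have "0 \<in> set xs" by (auto simp: lists_len_sum_def pos_lists_len_sum_def)
      then obtain i where i: "i < length xs" "xs ! i = 0" by (metis in_set_conv_nth)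
      then have "comp_prod e {..<length xs} (\<lambda>i. xs ! i) = 0" unfolding comp_prod_def using e0
        by (intro prod_zero) (use i in \<open>auto intro!: bexI[of _ i]\<close>)
      then show "list_weight w e xs = 0" by (simp add: list_weight_def)
    qed
  qed
  finally show ?thesis .
qed

lemma list_weight_mset_eq:
  assumes "mset xs = mset ys"
  shows "list_weight w e xs = list_weight w e ys"
proof -
  obtain p where p: "p permutes {..<length ys}" "permute_list p ys = xs"
    using mset_eq_permutation[OF assms] by blast
  have len: "length xs = length ys" using p by auto
  have nth: "xs ! i = ys ! p i" if "i < length ys" for i
    using p that by (auto simp: permute_list_nth)
  have bij: "bij_betw p {..<length ys} {..<length ys}" using p(1) by (rule permutes_imp_bij)
  have "partition_sum w {..<length ys} (\<lambda>i. ys ! i) = partition_sum w {..<length ys} (\<lambda>j. ys ! p j)"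
    by (rule partition_sum_reindex[OF bij])
  also have "\<dots> = partition_sum w {..<length ys} (\<lambda>i. xs ! i)" by (rule partition_sum_cong) (simp add: nth)
  finally have 1: "partition_sum w {..<length ys} (\<lambda>i. ys ! i) = partition_sum w {..<length ys} (\<lambda>i. xs ! i)" .
  have "comp_prod e {..<length ys} (\<lambda>i. ys ! i) = (\<Prod>j<length ys. e (ys ! p j))"
    unfolding comp_prod_def by (rule prod.reindex_bij_betw[OF bij, symmetric])
  also have "\<dots> = comp_prod e {..<length ys} (\<lambda>i. xs ! i)"
    unfolding comp_prod_def by (rule prod.cong) (simp_all add: nth)
  finally have 2: "comp_prod e {..<length ys} (\<lambda>i. ys ! i) = comp_prod e {..<length ys} (\<lambda>i. xs ! i)" .
  show ?thesis unfolding list_weight_def len using 1 2 by simp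
qed

lemma rev_sort_pos_lists_len_sum:
  assumes "xs \<in> pos_lists_len_sum l m"
  shows "rev (sort xs) \<in> {lam \<in> partitions_of m. length lam = l}"
proof -
  have "sum_list (rev (sort xs)) = sum_list xs"
    using sum_mset_sum_list[of "rev (sort xs)"] sum_mset_sum_list[of xs] by simp
  then show ?thesis using assms is_partition_rev_sort by (simp add: pos_lists_len_sum_def partitions_of_def)
qed

lemma rev_sort_fiber_eq_permutations:
  assumes "lam \<in> partitions_of m" "length lam = l"
  shows "{xs \<in> pos_lists_len_sum l m. rev (sort xs) = lam} = permutations_of_multiset (mset lam)"
proof (intro equalityI subsetI)
  fix xs assume "xs \<in> {xs \<in> pos_lists_len_sum l m. rev (sort xs) = lam}"
  then have "mset (rev (sort xs)) = mset lam" by simp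
  then have "mset xs = mset lam" by simp
  then show "xs \<in> permutations_of_multiset (mset lam)" by (simp add: permutations_of_multiset_def)
next
  fix xs assume "xs \<in> permutations_of_multiset (mset lam)"
  then have ms: "mset xs = mset lam" by (simp add: permutations_of_multiset_def)
  have lam: "is_partition lam" "sum_list lam = m" using assms(1) by (auto simp: partitions_of_def)
  have z: "0 \<notin> set xs" using arg_cong[OF ms, of set_mset] lam(1) unfolding is_partition_def by simp
  have "length xs = l" using arg_cong[OF ms, of size] assms(2) by simp
  moreover have "sum_list xs = m" using arg_cong[OF ms, of sum_mset] lam(2) by (simp add: sum_mset_sum_list)
  moreover have "rev (sort xs) = lam"
    using is_partition_mset_inj[OF is_partition_rev_sort[OF z] lam(1)] ms by simp
  ultimately show "xs \<in> {xs \<in> pos_lists_len_sum l m. rev (sort xs) = lam}"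
    using z by (simp add: pos_lists_len_sum_def)
qed

lemma sum_pos_lists_len_sum_group:
  "(\<Sum>xs\<in>pos_lists_len_sum l m. list_weight w e xs) = (\<Sum>lam | lam \<in> partitions_of m \<and> length lam = l.
    of_nat (card (permutations_of_multiset (mset lam))) * list_weight w e lam)"
proof -
  let ?T = "{lam \<in> partitions_of m. length lam = l}"
  have "finite (pos_lists_len_sum l m)"
    by (rule finite_subset[OF pos_lists_len_sum_subset finite_lists_len_sum])
  moreover have "finite ?T" by (rule finite_subset[OF _ finite_partitions_of]) auto
  moreover have "(\<lambda>xs. rev (sort xs)) ` pos_lists_len_sum l m \<subseteq> ?T"
    using rev_sort_pos_lists_len_sum by blast
  ultimately have "(\<Sum>xs\<in>pos_lists_len_sum l m. list_weight w e xs)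
      = (\<Sum>lam\<in>?T. \<Sum>xs | xs \<in> pos_lists_len_sum l m \<and> rev (sort xs) = lam. list_weight w e xs)"
    by (rule sum.group[symmetric])
  also have "\<dots> = (\<Sum>lam\<in>?T. of_nat (card (permutations_of_multiset (mset lam))) * list_weight w e lam)"
  proof (rule sum.cong[OF refl])
    fix lam assume "lam \<in> ?T"
    then have "{xs \<in> pos_lists_len_sum l m. rev (sort xs) = lam} = permutations_of_multiset (mset lam)"
      by (intro rev_sort_fiber_eq_permutations) auto
    then have "(\<Sum>xs | xs \<in> pos_lists_len_sum l m \<and> rev (sort xs) = lam. list_weight w e xs)
        = (\<Sum>xs\<in>permutations_of_multiset (mset lam). list_weight w e xs)" by simp
    also have "\<dots> = (\<Sum>xs\<in>permutations_of_multiset (mset lam). list_weight w e lam)"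
      by (intro sum.cong refl list_weight_mset_eq) (simp add: permutations_of_multiset_def)
    finally show "(\<Sum>xs | xs \<in> pos_lists_len_sum l m \<and> rev (sort xs) = lam. list_weight w e xs)
        = of_nat (card (permutations_of_multiset (mset lam))) * list_weight w e lam" by simp
  qed
  finally show ?thesis by simp
qed

definition mult_fact :: "nat list \<Rightarrow> nat" where
  "mult_fact lam = (\<Prod>i\<in>set lam. fact (count_list lam i))"

lemma card_permutations_mult_fact: "card (permutations_of_multiset (mset lam)) * mult_fact lam = fact (length lam)"
proof -
  have "card (permutations_of_multiset (mset lam)) * (\<Prod>x\<in>set_mset (mset lam). fact (count (mset lam) x)) = fact (size (mset lam))"
    by (rule card_permutations_of_multiset_aux)
  then show ?thesis unfolding mult_fact_def by (simp add: count_mset)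
qed

lemma exp_part_sum_eq_sum_partitions:
  assumes e0: "e 0 = 0"
  shows "exp_part_sum w e m = (\<Sum>lam\<in>partitions_of m. list_weight w e lam / of_nat (mult_fact lam))"
proof -
  let ?f = "\<lambda>lam. list_weight w e lam / of_nat (mult_fact lam)"
  have "part_comp_sum w e {..<l} m / fact l = (\<Sum>lam | lam \<in> partitions_of m \<and> length lam = l. ?f lam)"
    for l
  proof -
    have "part_comp_sum w e {..<l} m / fact l = (\<Sum>lam | lam \<in> partitions_of m \<and> length lam = l.
        of_nat (card (permutations_of_multiset (mset lam))) * list_weight w e lam / fact l)"
      unfolding part_comp_sum_eq_sum_lists[of e w l m, OF e0] sum_pos_lists_len_sum_group sum_divide_distrib ..
    also have "\<dots> = (\<Sum>lam | lam \<in> partitions_of m \<and> length lam = l. ?f lam)"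
    proof (rule sum.cong[OF refl])
      fix lam assume "lam \<in> {lam. lam \<in> partitions_of m \<and> length lam = l}"
      then have "real (card (permutations_of_multiset (mset lam))) * real (mult_fact lam) = fact l"
        using card_permutations_mult_fact[of lam] by (metis (mono_tags) mem_Collect_eq of_nat_fact of_nat_mult)
      moreover have "real (mult_fact lam) \<noteq> 0" unfolding mult_fact_def by (simp add: prod_zero_iff)
      ultimately show "of_nat (card (permutations_of_multiset (mset lam))) * list_weight w e lam / fact l = ?f lam"
        by (simp add: field_simps)
    qed
    finally show ?thesis .
  qed
  then have "exp_part_sum w e m = (\<Sum>l\<le>m. \<Sum>lam | lam \<in> partitions_of m \<and> length lam = l. ?f lam)"
    unfolding exp_part_sum_def by simp
  also have "\<dots> = (\<Sum>lam\<in>partitions_of m. ?f lam)"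
    using partitions_of_subset by (intro sum.group finite_partitions_of finite_atMost) fastforce
  finally show ?thesis .
qed

section \<open>The total gamma class of a sum of line bundles\<close>

abbreviation log1p :: "real fps" where "log1p \<equiv> fps_ln 1"

lemma fps_deriv_log1p_compose:
  assumes "A $ 0 = (0::real)"
  shows "fps_deriv (log1p oo A) = fps_deriv A * inverse (1 + A)"
proof -
  have "fps_deriv (log1p oo A) = (fps_deriv log1p oo A) * fps_deriv A"
    by (rule fps_compose_deriv[OF assms])
  also have "fps_deriv log1p = inverse (1 + fps_X)" by (simp add: fps_ln_deriv)
  also have "inverse (1 + fps_X) oo A = inverse ((1 + fps_X) oo A)"
    by (rule fps_inverse_compose[OF assms]) simp
  also have "(1 + fps_X) oo A = 1 + A"
    using assms by (simp add: fps_compose_add_distrib)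
  finally show ?thesis by (simp add: mult.commute)
qed

lemma fps_deriv_prod_one_plus:
  fixes A :: "nat \<Rightarrow> real fps"
  assumes "\<And>i. i < n \<Longrightarrow> A i $ 0 = 0"
  shows "fps_deriv (\<Prod>i<n. 1 + A i) = fps_deriv (\<Sum>i<n. log1p oo A i) * (\<Prod>i<n. 1 + A i)"
  using assms
proof (induction n)
  case 0
  then show ?case by simp
next
  case (Suc n)
  let ?Y = "\<Prod>i<n. 1 + A i"
  let ?H = "\<Sum>i<n. log1p oo A i"
  have IH: "fps_deriv ?Y = fps_deriv ?H * ?Y" using Suc by simp
  have A0: "A n $ 0 = 0" using Suc by simp
  have inv: "inverse (1 + A n) * (1 + A n) = 1" by (rule inverse_mult_eq_1) (simp add: A0)
  have "fps_deriv (\<Prod>i<Suc n. 1 + A i) = fps_deriv (?Y * (1 + A n))" by simp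
  also have "\<dots> = fps_deriv ?Y * (1 + A n) + ?Y * fps_deriv (A n)" by (simp add: fps_deriv_mult)
  also have "\<dots> = fps_deriv ?H * ?Y * (1 + A n) + fps_deriv (A n) * (inverse (1 + A n) * (1 + A n)) * ?Y"
    unfolding IH inv by (simp add: mult.commute)
  also have "\<dots> = (fps_deriv ?H + fps_deriv (log1p oo A n)) * (?Y * (1 + A n))"
    by (simp add: fps_deriv_log1p_compose[OF A0] algebra_simps)
  also have "\<dots> = fps_deriv (\<Sum>i<Suc n. log1p oo A i) * (\<Prod>i<Suc n. 1 + A i)" by simp
  finally show ?case .
qed

lemma prod_one_plus_nth_0:
  fixes A :: "nat \<Rightarrow> real fps"
  assumes "\<And>i. i < n \<Longrightarrow> A i $ 0 = 0"
  shows "(\<Prod>i<n. 1 + A i) $ 0 = 1"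
  using assms by (induction n) (auto simp: fps_mult_nth)

lemma fps_nth_rec_if_log_deriv:
  fixes Y H :: "real fps"
  assumes "fps_deriv Y = fps_deriv H * Y"
  shows "of_nat (Suc m) * Y $ Suc m = (\<Sum>a\<in>{1..Suc m}. (of_nat a * H $ a) * Y $ (Suc m - a))"
proof -
  have "of_nat (Suc m) * Y $ Suc m = (fps_deriv Y) $ m" by (simp add: fps_deriv_nth)
  also have "\<dots> = (\<Sum>i=0..m. (of_nat (Suc i) * H $ Suc i) * Y $ (m - i))"
    unfolding assms fps_mult_nth by (simp add: fps_deriv_nth)
  also have "\<dots> = (\<Sum>a\<in>{1..Suc m}. (of_nat a * H $ a) * Y $ (Suc m - a))"
  proof -
    have "(\<Sum>a\<in>{0 + 1..m + 1}. (of_nat a * H $ a) * Y $ (Suc m - a))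
        = (\<Sum>i\<in>{0..m}. (of_nat (i + 1) * H $ (i + 1)) * Y $ (Suc m - (i + 1)))"
      by (rule sum.shift_bounds_cl_nat_ivl)
    then show ?thesis by simp
  qed
  finally show ?thesis .
qed

lemma fps_exp_minus_one_power_nth:
  "((fps_exp c - 1) ^ r) $ a = c ^ a * fact r * real (Stirling a r) / fact a"
proof (induction a arbitrary: r)
  case 0
  have "((fps_exp c - 1) ^ r) $ 0 = ((fps_exp c - 1) $ 0) ^ r" by (rule fps_nth_power_0)
  then show ?case by (cases r) auto
next
  case (Suc a)
  let ?g = "fps_exp c - 1 :: real fps"
  show ?case
  proof (cases r)
    case 0
    then show ?thesis by simp
  next
    case (Suc r')
    have dg: "fps_deriv ?g = fps_const c * (?g + 1)" by simp
    have "fps_deriv (?g ^ r) = fps_const (of_nat r) * fps_deriv ?g * ?g ^ r'"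
      unfolding Suc fps_deriv_power diff_Suc_1 ..
    also have "\<dots> = fps_const (of_nat r * c) * (?g ^ r + ?g ^ r')"
      unfolding dg using Suc by (simp add: algebra_simps fps_const_mult[symmetric] del: fps_const_mult)
    finally have d: "fps_deriv (?g ^ r) = fps_const (of_nat r * c) * (?g ^ r + ?g ^ r')" .
    define R where "R = of_nat r * c *
      (c ^ a * fact r * real (Stirling a r) / fact a + c ^ a * fact r' * real (Stirling a r') / fact a)"
    have "of_nat (Suc a) * (?g ^ r) $ Suc a = (fps_deriv (?g ^ r)) $ a" by (simp add: fps_deriv_nth)
    also have "\<dots> = of_nat r * c * ((?g ^ r) $ a + (?g ^ r') $ a)" unfolding d by simp
    also have "\<dots> = R" unfolding R_def using Suc.IH by simp
    finally have "(?g ^ r) $ Suc a = R / of_nat (Suc a)"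
      by (simp add: eq_divide_eq mult.commute del: of_nat_Suc)
    moreover have "real (Stirling (Suc a) r) = of_nat r * real (Stirling a r) + real (Stirling a r')"
      using Suc by (simp add: algebra_simps)
    moreover have "(fact r :: real) = of_nat r * fact r'" using Suc by simp
    ultimately show ?thesis unfolding R_def by (simp add: field_simps)
  qed
qed

definition log_gamma_coeff :: "nat \<Rightarrow> real \<Rightarrow> real" where
  "log_gamma_coeff a t = (\<Sum>r\<in>{1..a}. (-1) ^ (r - 1) * fact (r - 1) * t ^ r * real (Stirling a r) / fact a)"

lemma log1p_nth: "log1p $ i = (if i = 0 then 0 else (-1) ^ (i - 1) / of_nat i)"
  by (simp add: fps_ln_nth)

lemma log1p_compose_nth: "(log1p oo A) $ a = (\<Sum>r\<in>{1..a}. (-1) ^ (r - 1) / of_nat r * (A ^ r) $ a)"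
  by (simp add: fps_compose_nth log1p_nth sum.atLeast_Suc_atMost)

lemma log1p_compose_exp_nth: "(log1p oo (fps_const t * (fps_exp c - 1))) $ a = c ^ a * log_gamma_coeff a t"
proof -
  have "(log1p oo (fps_const t * (fps_exp c - 1))) $ a
      = (\<Sum>i\<in>{1..a}. (-1) ^ (i - 1) / of_nat i * ((fps_const t * (fps_exp c - 1)) ^ i) $ a)"
    by (rule log1p_compose_nth)
  also have "\<dots> = (\<Sum>i\<in>{1..a}. c ^ a * ((-1) ^ (i - 1) * fact (i - 1) * t ^ i * real (Stirling a i) / fact a))"
  proof (rule sum.cong[OF refl])
    fix i assume i: "i \<in> {1..a}"
    have p: "(fps_const t * (fps_exp c - 1)) ^ i = fps_const (t ^ i) * (fps_exp c - 1) ^ i"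
      by (simp add: power_mult_distrib fps_const_power)
    have fi: "(fact i :: real) = of_nat i * fact (i - 1)"
      using i by (metis fact_num_eq_if of_nat_eq_0_iff atLeastAtMost_iff not_one_le_zero)
    show "(-1) ^ (i - 1) / of_nat i * ((fps_const t * (fps_exp c - 1)) ^ i) $ a
        = c ^ a * ((-1) ^ (i - 1) * fact (i - 1) * t ^ i * real (Stirling a i) / fact a)"
      unfolding p using i by (simp add: fps_exp_minus_one_power_nth fi field_simps)
  qed
  also have "\<dots> = c ^ a * log_gamma_coeff a t" unfolding log_gamma_coeff_def by (simp add: sum_distrib_left)
  finally show ?thesis .
qed

lemma log1p_esym_fps: "log1p oo (esym_fps n x - 1) = (\<Sum>i<n. log1p oo (fps_const (x i) * fps_X))"
proof -
  let ?E = "esym_fps n x"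
  let ?R = "\<Sum>i<n. log1p oo (fps_const (x i) * fps_X)"
  have A0: "\<And>i. i < n \<Longrightarrow> (fps_const (x i) * fps_X) $ 0 = 0" by simp
  have E0: "(?E - 1) $ 0 = 0" by (simp add: esym_fps_nth_0)
  have dE: "fps_deriv ?E = fps_deriv ?R * ?E" unfolding esym_fps_def by (rule fps_deriv_prod_one_plus) simp
  have inv: "?E * inverse ?E = 1" using inverse_mult_eq_1[of ?E] by (simp add: esym_fps_nth_0 mult.commute)
  have "fps_deriv (log1p oo (?E - 1)) = fps_deriv ?E * inverse ?E"
    using fps_deriv_log1p_compose[OF E0] by simp
  also have "\<dots> = fps_deriv ?R" unfolding dE using inv by (simp add: mult.assoc)
  finally have d: "fps_deriv (log1p oo (?E - 1)) = fps_deriv ?R" .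
  have "(log1p oo (?E - 1)) $ 0 = 0" by simp
  moreover have "?R $ 0 = 0" by (simp add: fps_sum_nth)
  ultimately show ?thesis using d by (simp add: fps_deriv_eq_iff)
qed

lemma power_sum_eq_esym:
  assumes a: "a \<ge> 1"
  shows "(\<Sum>i<n. x i ^ a) =
    of_nat a * (-1) ^ (a - 1) * (\<Sum>r\<in>{1..a}. (-1) ^ (r - 1) / of_nat r * ((esym_fps n x - 1) ^ r) $ a)"
    (is "?P = _ * ?S")
proof -
  have "(\<Sum>i<n. log1p oo (fps_const (x i) * fps_X)) $ a = ?P * ((-1) ^ (a - 1) / of_nat a)"
    using a by (simp add: fps_sum_nth fps_compose_linear log1p_nth sum_distrib_right sum_divide_distrib)
  moreover have "(log1p oo (esym_fps n x - 1)) $ a = ?S" by (rule log1p_compose_nth)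
  ultimately have "?P * ((-1) ^ (a - 1) / of_nat a) = ?S" using log1p_esym_fps by simp
  then have eq: "?P * (-1) ^ (a - 1) = of_nat a * ?S" using a by (simp add: field_simps)
  have "(-1 :: real) ^ (a - 1) * (-1) ^ (a - 1) = 1"
    by (simp flip: power_add add: power_mult[symmetric])
  then have "?P = ?P * (-1) ^ (a - 1) * (-1) ^ (a - 1)" by (simp add: mult.assoc)
  also have "\<dots> = of_nat a * (-1) ^ (a - 1) * ?S" unfolding eq by (simp only: mult_ac)
  finally show ?thesis .
qed

definition esym_seq :: "nat \<Rightarrow> (nat \<Rightarrow> real) \<Rightarrow> nat \<Rightarrow> real" where
  "esym_seq n x j = (if j = 0 then 0 else esym n j x)"

text \<open>Newton's identity turns p_a kappa_a(t) into sum_r gamma_weight t a r [s^a] (E(s) - 1)^r / r!,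
  where kappa_a(t) = log_gamma_coeff a t.\<close>

definition gamma_weight :: "real \<Rightarrow> nat \<Rightarrow> nat \<Rightarrow> real" where
  "gamma_weight t a r = (-1) ^ (a + r) * fact (r - 1) * (of_nat a * log_gamma_coeff a t)"

definition gamma_fps :: "nat \<Rightarrow> (nat \<Rightarrow> real) \<Rightarrow> real \<Rightarrow> real fps" where
  "gamma_fps n x t = (\<Prod>i<n. 1 + fps_const t * (fps_exp (x i) - 1))"

definition log_gamma_fps :: "nat \<Rightarrow> (nat \<Rightarrow> real) \<Rightarrow> real \<Rightarrow> real fps" where
  "log_gamma_fps n x t = (\<Sum>i<n. log1p oo (fps_const t * (fps_exp (x i) - 1)))"

lemma Abs_fps_esym_seq: "Abs_fps (esym_seq n x) = esym_fps n x - 1"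
  by (rule fps_ext) (simp add: esym_seq_def esym_fps_nth)

lemma log_gamma_fps_nth:
  assumes a: "a \<ge> 1"
  shows "of_nat a * log_gamma_fps n x t $ a =
    (\<Sum>r\<in>{1..a}. of_nat a * gamma_weight t a r * comp_prod_sum (esym_seq n x) {..<r} a / fact r)"
proof -
  have "log_gamma_fps n x t $ a = log_gamma_coeff a t * (\<Sum>i<n. x i ^ a)"
    unfolding log_gamma_fps_def by (simp add: fps_sum_nth log1p_compose_exp_nth sum_distrib_left mult.commute)
  also have "\<dots> = (\<Sum>r\<in>{1..a}. log_gamma_coeff a t *
      (of_nat a * (-1) ^ (a - 1) * ((-1) ^ (r - 1) / of_nat r * ((esym_fps n x - 1) ^ r) $ a)))"
    unfolding power_sum_eq_esym[OF a] sum_distrib_left ..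
  also have "\<dots> = (\<Sum>r\<in>{1..a}. gamma_weight t a r * comp_prod_sum (esym_seq n x) {..<r} a / fact r)"
  proof (rule sum.cong[OF refl])
    fix r assume r: "r \<in> {1..a}"
    have sgn: "(-1) ^ (a + r) = ((-1) ^ (a - 1) * (-1) ^ (r - 1) :: real)"
      using a r by (cases a; cases r) (simp_all add: power_add)
    have fr: "(fact r :: real) = of_nat r * fact (r - 1)"
      using r by (metis fact_num_eq_if of_nat_eq_0_iff atLeastAtMost_iff not_one_le_zero)
    have "comp_prod_sum (esym_seq n x) {..<r} a = ((esym_fps n x - 1) ^ r) $ a"
      by (simp add: comp_prod_sum_eq_power_nth Abs_fps_esym_seq)
    then show "log_gamma_coeff a t * (of_nat a * (-1) ^ (a - 1) * ((-1) ^ (r - 1) / of_nat r * ((esym_fps n x - 1) ^ r) $ a))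
        = gamma_weight t a r * comp_prod_sum (esym_seq n x) {..<r} a / fact r"
      unfolding gamma_weight_def fr sgn using r by (simp add: field_simps)
  qed
  finally show ?thesis by (simp add: sum_distrib_left mult.assoc)
qed

lemma gamma_fps_nth_eq_exp_part_sum: "gamma_fps n x t $ m = exp_part_sum (gamma_weight t) (esym_seq n x) m"
proof (induction m rule: less_induct)
  case (less m)
  let ?w = "gamma_weight t" and ?e = "esym_seq n x"
  show ?case
  proof (cases m)
    case 0
    have "gamma_fps n x t $ 0 = 1" unfolding gamma_fps_def by (rule prod_one_plus_nth_0) simp
    then show ?thesis using 0 by (simp add: exp_part_sum_0)
  next
    case (Suc m')
    have "fps_deriv (gamma_fps n x t) = fps_deriv (log_gamma_fps n x t) * gamma_fps n x t"
      unfolding gamma_fps_def log_gamma_fps_def by (rule fps_deriv_prod_one_plus) simp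
    then have "of_nat m * gamma_fps n x t $ m
        = (\<Sum>a\<in>{1..m}. (of_nat a * log_gamma_fps n x t $ a) * gamma_fps n x t $ (m - a))"
      unfolding Suc by (rule fps_nth_rec_if_log_deriv)
    also have "\<dots> = (\<Sum>a\<in>{1..m}.
        (\<Sum>r\<in>{1..a}. of_nat a * ?w a r * comp_prod_sum ?e {..<r} a / fact r) * exp_part_sum ?w ?e (m - a))"
      using less by (intro sum.cong refl) (simp add: log_gamma_fps_nth)
    also have "\<dots> = of_nat m * exp_part_sum ?w ?e m"
      by (rule exp_part_sum_rec[symmetric]) (simp add: esym_seq_def)
    finally show ?thesis using Suc by simp
  qed
qed

section \<open>Comparison with the right-hand side\<close>

definition inner_real :: "nat \<Rightarrow> real \<Rightarrow> real" where
  "inner_real a t = (\<Sum>j<a. real (Stirling a (a - j)) / (real ((a - 1) choose j) * fact j) * (- t) ^ (a - 1 - j))"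

lemma of_rat_fact: "(of_rat (fact j) :: real) = fact j"
  by (metis of_nat_fact of_rat_of_nat_eq)

lemma of_rat_poly_inner_poly: "of_rat (poly (inner_poly a) q) = inner_real a (of_rat q)"
  unfolding inner_poly_def inner_real_def
  by (simp add: poly_sum of_rat_sum of_rat_mult of_rat_divide of_rat_power of_rat_minus of_rat_fact)

lemma log_gamma_coeff_eq_inner_real: "of_nat a * log_gamma_coeff a t = t * inner_real a t"
proof (cases "a = 0")
  case False
  let ?k = "\<lambda>r. (-1) ^ (r - 1) * fact (r - 1) * t ^ r * real (Stirling a r) / fact a"
  have "real (Stirling a (a - j)) / (real ((a - 1) choose j) * fact j) * (- t) ^ (a - 1 - j) * t
      = of_nat a * ?k (a - j)" if "j < a" for j
  proof -
    define r where "r = a - 1 - j"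
    have r: "a - j = Suc r" using that by (simp add: r_def)
    have C: "real ((a - 1) choose j) = fact (a - 1) / (fact j * fact r)"
      using that by (simp add: binomial_fact r_def)
    have F: "(fact a :: real) = of_nat a * fact (a - 1)"
      using False by (metis fact_num_eq_if)
    show ?thesis
      unfolding r diff_Suc_1 r_def[symmetric] C F using False by (simp add: power_minus[of t] field_simps)
  qed
  then have "t * inner_real a t = (\<Sum>j<a. of_nat a * ?k (a - j))"
    unfolding inner_real_def sum_distrib_left by (intro sum.cong) (auto simp: mult_ac)
  also have "\<dots> = (\<Sum>r\<in>{1..a}. of_nat a * ?k r)"
    by (rule sum.reindex_bij_witness[of _ "\<lambda>r. a - r" "\<lambda>j. a - j"]) auto
  also have "\<dots> = of_nat a * log_gamma_coeff a t" unfolding log_gamma_coeff_def sum_distrib_left ..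
  finally show ?thesis by simp
qed (simp add: log_gamma_coeff_def inner_real_def)

lemma of_rat_poly_map_poly: "poly (map_poly of_rat p) (of_rat q :: real) = of_rat (poly p q)"
  by (induction p) (simp_all add: map_poly_pCons of_rat_add of_rat_mult)

lemma of_rat_mult_fact: "(of_rat (\<Prod>i\<in>set lam. of_nat (fact (count_list lam i))) :: real) = of_nat (mult_fact lam)"
  unfolding mult_fact_def by (simp add: of_rat_prod of_rat_fact)

definition rhs_partition_sum :: "nat list \<Rightarrow> real \<Rightarrow> real" where
  "rhs_partition_sum lam t = (\<Sum>P | partition_on {..<length lam} P.
    (\<Prod>B\<in>P. fact (card B - 1)) * ((\<Prod>B\<in>P. inner_real (block_weight lam B) t) * t ^ card P))"

lemma of_rat_poly_rhs_poly:
  "(of_rat (poly (rhs_poly lam) q) :: real)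
    = (-1) ^ (sum_list lam - length lam) / of_nat (mult_fact lam) * rhs_partition_sum lam (of_rat q)"
proof -
  have "poly (rhs_poly lam) q = ((-1) ^ (sum_list lam - length lam) / (\<Prod>i\<in>set lam. of_nat (fact (count_list lam i)))) *
     (\<Sum>P | partition_on {..<length lam} P. (\<Prod>B\<in>P. of_nat (fact (card B - 1))) *
       ((\<Prod>B\<in>P. poly (inner_poly (block_weight lam B)) q) * q ^ card P))"
    unfolding rhs_poly_def by (simp add: poly_sum poly_prod poly_monom)
  then show ?thesis
    unfolding rhs_partition_sum_def
    by (simp add: of_rat_mult of_rat_divide of_rat_sum of_rat_prod of_rat_power of_rat_minus
        of_rat_mult_fact[symmetric] of_rat_poly_inner_poly of_rat_fact)
qed

lemma partition_sum_gamma_weight: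
  assumes lam: "is_partition lam"
  shows "partition_sum (gamma_weight t) {..<length lam} (\<lambda>i. lam ! i)
    = (-1) ^ (sum_list lam - length lam) * rhs_partition_sum lam t"
  unfolding partition_sum_def rhs_partition_sum_def sum_distrib_left
proof (rule sum.cong[OF refl])
  fix P assume "P \<in> {P. partition_on {..<length lam} P}"
  then have P: "partition_on {..<length lam} P" by simp
  have "length lam \<le> sum_list lam" using lam length_le_sum_list by (simp add: is_partition_def)
  moreover have "(\<Sum>B\<in>P. block_weight lam B) = sum_list lam"
    unfolding block_weight_def using sum_partition_on_blocks[OF P, of "\<lambda>i. lam ! i"]
    by (simp add: sum_list_sum_nth atLeast0LessThan)
  moreover have "(\<Sum>B\<in>P. card B) = length lam"
    using sum_partition_on_blocks[OF P, of "\<lambda>i. 1::nat"] by simp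
  ultimately have exps: "(\<Sum>B\<in>P. block_weight lam B + card B) = (sum_list lam - length lam) + 2 * length lam"
    by (simp add: sum.distrib)
  have "(\<Prod>B\<in>P. (-1::real) ^ (block_weight lam B + card B)) = (-1) ^ (\<Sum>B\<in>P. block_weight lam B + card B)"
    by (rule power_sum[symmetric])
  then have sgn: "(\<Prod>B\<in>P. (-1::real) ^ (block_weight lam B + card B)) = (-1) ^ (sum_list lam - length lam)"
    unfolding exps by (simp add: power_add power_mult)
  have "(\<Prod>B\<in>P. gamma_weight t (\<Sum>i\<in>B. lam ! i) (card B))
      = (\<Prod>B\<in>P. (-1) ^ (block_weight lam B + card B) * fact (card B - 1) * (t * inner_real (block_weight lam B) t))"
    unfolding gamma_weight_def log_gamma_coeff_eq_inner_real block_weight_def ..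
  also have "\<dots> = (\<Prod>B\<in>P. (-1::real) ^ (block_weight lam B + card B)) *
      ((\<Prod>B\<in>P. fact (card B - 1)) * ((\<Prod>B\<in>P. inner_real (block_weight lam B) t) * t ^ card P))"
    by (simp add: prod.distrib mult_ac)
  finally show "(\<Prod>B\<in>P. gamma_weight t (\<Sum>i\<in>B. lam ! i) (card B)) = (-1) ^ (sum_list lam - length lam) *
      ((\<Prod>B\<in>P. fact (card B - 1)) * ((\<Prod>B\<in>P. inner_real (block_weight lam B) t) * t ^ card P))"
    unfolding sgn .
qed

lemma comp_prod_esym_seq:
  assumes lam: "is_partition lam"
  shows "comp_prod (esym_seq n x) {..<length lam} (\<lambda>i. lam ! i) = c_part n lam x"
  unfolding comp_prod_def c_part_def esym_seq_def
proof (rule prod.cong[OF refl])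
  fix i assume "i \<in> {..<length lam}"
  then have "lam ! i \<noteq> 0" using lam unfolding is_partition_def by (metis lessThan_iff nth_mem)
  then show "(if lam ! i = 0 then 0 else esym n (lam ! i) x) = esym n (lam ! i) x" by simp
qed

lemma gamma_fps_nth_eq_sum_partitions:
  "gamma_fps n x (of_rat q) $ m = (\<Sum>lam\<in>partitions_of m. of_rat (poly (rhs_poly lam) q) * c_part n lam x)"
proof -
  have "gamma_fps n x (of_rat q) $ m = (\<Sum>lam\<in>partitions_of m.
      list_weight (gamma_weight (of_rat q)) (esym_seq n x) lam / of_nat (mult_fact lam))"
    unfolding gamma_fps_nth_eq_exp_part_sum by (rule exp_part_sum_eq_sum_partitions) (simp add: esym_seq_def)
  also have "\<dots> = (\<Sum>lam\<in>partitions_of m. of_rat (poly (rhs_poly lam) q) * c_part n lam x)"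
    unfolding list_weight_def of_rat_poly_rhs_poly
    by (intro sum.cong refl) (simp add: partitions_of_def partition_sum_gamma_weight comp_prod_esym_seq)
  finally show ?thesis .
qed

lemma gamma_fps_nth_eq_sum_esym: "gamma_fps n x t $ m = (\<Sum>k\<le>n. t ^ k * (esym n k (\<lambda>i. fps_exp (x i) - 1)) $ m)"
proof -
  have "gamma_fps n x t = (\<Sum>k\<le>n. fps_const t ^ k * esym n k (\<lambda>i. fps_exp (x i) - 1))"
    unfolding gamma_fps_def by (rule prod_one_plus_eq_sum_esym)
  then show ?thesis by (simp add: fps_sum_nth fps_const_power)
qed

lemma poly_eq_if_eq_on_Rats:
  fixes p q :: "'a::field_char_0 poly"
  assumes "\<And>r. poly p (of_rat r) = poly q (of_rat r)"
  shows "p = q"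
proof (rule ccontr)
  assume "p \<noteq> q"
  then have "finite {x. poly (p - q) x = 0}" by (intro poly_roots_finite) simp
  moreover have "\<rat> \<subseteq> {x. poly (p - q) x = 0}" using assms by (auto elim: Rats_cases)
  ultimately show False using Rats_infinite finite_subset by blast
qed

lemma esym_exp_minus_one_nth:
  assumes "k \<le> n"
  shows "esym n k (\<lambda>i. fps_exp (x i) - 1) $ m
    = (\<Sum>mu\<in>partitions_of m. of_rat (coeff (rhs_poly mu) k) * c_part n mu x)"
proof -
  define P1 where "P1 = (\<Sum>j\<le>n. monom (esym n j (\<lambda>i. fps_exp (x i) - 1) $ m) j)"
  define P2 where "P2 = (\<Sum>mu\<in>partitions_of m. smult (c_part n mu x) (map_poly of_rat (rhs_poly mu)))"
  have "P1 = P2"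
  proof (rule poly_eq_if_eq_on_Rats)
    fix q
    have "poly P1 (of_rat q) = gamma_fps n x (of_rat q) $ m"
      unfolding P1_def gamma_fps_nth_eq_sum_esym by (simp add: poly_sum poly_monom mult.commute)
    also have "\<dots> = (\<Sum>mu\<in>partitions_of m. of_rat (poly (rhs_poly mu) q) * c_part n mu x)"
      by (rule gamma_fps_nth_eq_sum_partitions)
    also have "\<dots> = poly P2 (of_rat q)"
      unfolding P2_def by (simp add: poly_sum of_rat_poly_map_poly mult.commute)
    finally show "poly P1 (of_rat q) = poly P2 (of_rat q)" .
  qed
  then have "coeff P1 k = coeff P2 k" by simp
  then show ?thesis
    unfolding P1_def P2_def using assms by (simp add: coeff_sum coeff_map_poly mult.commute)
qed

theorem theorem2p1:
  fixes b :: "nat \<Rightarrow> nat list \<Rightarrow> rat" and lam :: "nat list" and k :: nat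
  assumes "ch_gamma_coeffs b"
    and "is_partition lam"
    and "k \<ge> 1"
  shows "b k lam = coeff (rhs_poly lam) k"
proof -
  define m where "m = sum_list lam"
  define n where "n = m + k"
  have "of_rat (b k lam) - of_rat (coeff (rhs_poly lam) k) = (0::real)"
  proof (rule c_part_linear_independent)
    show "finite (partitions_of m)" by (rule finite_partitions_of)
    show "\<forall>mu\<in>partitions_of m. is_partition mu \<and> (\<forall>a\<in>set mu. a \<le> n)"
      unfolding partitions_of_def n_def using member_le_sum_list by fastforce
    show "lam \<in> partitions_of m" using assms(2) by (simp add: partitions_of_def m_def)
    show "\<forall>x. (\<Sum>mu\<in>partitions_of m. (of_rat (b k mu) - of_rat (coeff (rhs_poly mu) k)) * c_part n mu x) = 0"
    proof
      fix x
      have "(\<Sum>mu\<in>partitions_of m. of_rat (b k mu) * c_part n mu x)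
          = (\<Sum>mu\<in>partitions_of m. of_rat (coeff (rhs_poly mu) k) * c_part n mu x)"
        using assms(1,3) esym_exp_minus_one_nth[of k n x m] unfolding ch_gamma_coeffs_def n_def by auto
      then show "(\<Sum>mu\<in>partitions_of m. (of_rat (b k mu) - of_rat (coeff (rhs_poly mu) k)) * c_part n mu x) = 0"
        by (simp add: left_diff_distrib sum_subtractf)
    qed
  qed
  then show ?thesis by simp
qed

end
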